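(* Let $(\omega,\nabla)$ be Poisson-compatible and $S(\xi)=\xi_pS^p{}_{nm}dx^n\otimes dx^m$ a bundle map $\Omega^1(M)\to\Omega^1(M)\otimes_0\Omega^1(M)$ such that $\nabla+S$ is torsion free. Then the quantum torsion of $\nabla_{QS}$ is $(\wedge_1\nabla_{QS}-d)(\xi)=\frac\lambda2\xi_pA^p{}_{nm}dx^m\wedge dx^n$ with $$A^p{}_{nm}=\tfrac14\omega^{is}(S^p{}_{ij}+S^p{}_{ji})\big(T^j{}_{nm;s}-R^j{}_{nms}+R^j{}_{mns}\big)-\tfrac14\omega^{ij}\big(T^s{}_{nm}R^p{}_{sij}-T^p{}_{sm}R^s{}_{nij}+T^p{}_{sn}R^s{}_{mij}\big).$$
   Context: Coordinates $x^i$, summation convention. $\nabla_jdx^i=-\Gamma^i_{jk}dx^k$; torsion $T^i_{jk}=\Gamma^i_{jk}-\Gamma^i_{kj}$; curvature $[\nabla_i,\nabla_j]dx^k=-R^k{}_{mij}dx^m$; semicolon = covariant derivative w.r.t. $\nabla$. Poisson-compatible: $d(\omega^{ij})-\omega^{kj}\nabla_k(dx^i)-\omega^{ik}\nabla_k(dx^j)=0$. Work over $\mathbb{C}[\lambda]/(\lambda^2)$. $\Omega^1A_1$: 1-forms with $a\bullet\xi=a\xi+\frac\lambda2\omega^{ij}a_{,i}\nabla_j\xi$, $\xi\bullet a=a\xi-\frac\lambda2\omega^{ij}a_{,i}\nabla_j\xi$ over functions with $a\bullet b=ab+\frac\lambda2\omega^{ij}a_{,i}b_{,j}$; $\otimes_1$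 the corresponding tensor product; $q(\xi\otimes_1\eta)=\xi\otimes_0\eta+\frac\lambda2\omega^{ij}\nabla_i\xi\otimes_0\nabla_j\eta$. $\nabla_Q\xi=q^{-1}(dx^k\otimes_0\nabla_k\xi)-\frac\lambda2\omega^{ij}dx^k\otimes_1[\nabla_k,\nabla_j]\nabla_i\xi$; $\nabla_i(S)=\nabla_i\circ S-S\circ\nabla_i$; $Q(S)=S+\frac\lambda2\omega^{ij}\nabla_i\circ\nabla_j(S)$; $\nabla_{QS}=\nabla_Q+q^{-1}Q(S)$. $\xi\wedge_1\eta=\xi\wedge\eta+\frac\lambda2\omega^{ij}\nabla_i\xi\wedge\nabla_j\eta+\lambda(-1)^{|\xi|+1}H^{ij}\wedge(\partial_i\lrcorner\xi)\wedge(\partial_j\lrcorner\eta)$ with $H^{ij}=\frac14\omega^{is}(T^j{}_{nm;s}-2R^j{}_{nms})dx^m\wedge dx^n$. *)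

theory Defs
  imports "HOL-Analysis.Analysis" "HOL-Library.Multiset" "HOL-Library.Function_Algebras"
begin

(* Local coordinate setting: a chart U (open) in real^'n, indices of type 'n.
   Christoffel symbols  Gam i j k = Gamma^i_{jk}  (so nabla_j dx^i = - Gamma^i_{jk} dx^k),
   Poisson bivector     om i j    = omega^{ij},
   bundle map           S p n m   = S^p_{nm}.
   Classical 1-forms:   xi :: 'n => real^'n => complex   (xi m = xi_m),
   2-tensors / 2-forms: 'n => 'n => real^'n => complex   (components). *)

type_synonym 'n cform = "'n \<Rightarrow> real^'n \<Rightarrow> complex"
type_synonym 'n ctens = "'n \<Rightarrow> 'n \<Rightarrow> real^'n \<Rightarrow> complex"

(* elements over C[lambda]/(lambda^2):  (a0, a1)  stands for  a0 + lambda a1 *)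
type_synonym 'n lform = "'n cform \<times> 'n cform"
type_synonym 'n ltens = "'n ctens \<times> 'n ctens"
(* an element of Omega^1 A_1 (x)_1 Omega^1 A_1, as a formal finite sum of  xi (x)_1 eta *)
type_synonym 'n tens1 = "('n lform \<times> 'n lform) multiset"

definition pd :: "'n::finite \<Rightarrow> (real^'n \<Rightarrow> 'a::real_normed_vector) \<Rightarrow> real^'n \<Rightarrow> 'a" where
  "pd i f x = frechet_derivative f (at x) (axis i 1)"

fun iter_pd :: "'n::finite list \<Rightarrow> (real^'n \<Rightarrow> 'a::real_normed_vector) \<Rightarrow> real^'n \<Rightarrow> 'a" where
  "iter_pd [] f = f"
| "iter_pd (i # is) f = pd i (iter_pd is f)"

definition smooth_on :: "(real^'n::finite) set \<Rightarrow> (real^'n \<Rightarrow> 'a::real_normed_vector) \<Rightarrow> bool" where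
  "smooth_on U f \<longleftrightarrow> (\<forall>is. iter_pd is f differentiable_on U)"

definition dx :: "'n \<Rightarrow> 'n \<Rightarrow> real^'n \<Rightarrow> 'a::real_normed_field" where
  "dx k = (\<lambda>l x. if l = k then 1 else 0)"

definition cov :: "('n::finite \<Rightarrow> 'n \<Rightarrow> 'n \<Rightarrow> real^'n \<Rightarrow> real) \<Rightarrow> 'n
     \<Rightarrow> ('n \<Rightarrow> real^'n \<Rightarrow> 'a::real_normed_field) \<Rightarrow> 'n \<Rightarrow> real^'n \<Rightarrow> 'a" where
  "cov Gam i xi = (\<lambda>m x. pd i (xi m) x - (\<Sum>k\<in>UNIV. of_real (Gam k i m x) * xi k x))"

definition cov2 :: "('n::finite \<Rightarrow> 'n \<Rightarrow> 'n \<Rightarrow> real^'n \<Rightarrow> real) \<Rightarrow> 'n \<Rightarrow> 'n ctens \<Rightarrow> 'n ctens" where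
  "cov2 Gam i X = (\<lambda>a b x. pd i (X a b) x
      - (\<Sum>k\<in>UNIV. of_real (Gam k i a x) * X k b x)
      - (\<Sum>k\<in>UNIV. of_real (Gam k i b x) * X a k x))"

definition tors :: "('n \<Rightarrow> 'n \<Rightarrow> 'n \<Rightarrow> real^'n \<Rightarrow> real) \<Rightarrow> 'n \<Rightarrow> 'n \<Rightarrow> 'n \<Rightarrow> real^'n \<Rightarrow> real" where
  "tors Gam i j k x = Gam i j k x - Gam i k j x"

(* curvature: [nabla_i, nabla_j] dx^k = - R^k_{m i j} dx^m ;  curv Gam k m i j = R^k_{mij} *)
definition curv :: "('n::finite \<Rightarrow> 'n \<Rightarrow> 'n \<Rightarrow> real^'n \<Rightarrow> real) \<Rightarrow> 'n \<Rightarrow> 'n \<Rightarrow> 'n \<Rightarrow> 'n \<Rightarrow> real^'n \<Rightarrow> real" where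
  "curv Gam k m i j x = - (cov Gam i (cov Gam j (dx k)) m x - cov Gam j (cov Gam i (dx k)) m x)"

(* covariant derivative of the torsion tensor:  tors_cd Gam j n m s = T^j_{nm;s} *)
definition tors_cd :: "('n::finite \<Rightarrow> 'n \<Rightarrow> 'n \<Rightarrow> real^'n \<Rightarrow> real) \<Rightarrow> 'n \<Rightarrow> 'n \<Rightarrow> 'n \<Rightarrow> 'n \<Rightarrow> real^'n \<Rightarrow> real" where
  "tors_cd Gam j n m s x = pd s (tors Gam j n m) x
      + (\<Sum>l\<in>UNIV. Gam j s l x * tors Gam l n m x)
      - (\<Sum>l\<in>UNIV. Gam l s n x * tors Gam j l m x)
      - (\<Sum>l\<in>UNIV. Gam l s m x * tors Gam j n l x)"

definition wedge :: "'n cform \<Rightarrow> 'n cform \<Rightarrow> 'n ctens" where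
  "wedge a b = (\<lambda>i j x. a i x * b j x - a j x * b i x)"

definition wedgeT :: "'n ctens \<Rightarrow> 'n ctens" where
  "wedgeT X = (\<lambda>i j x. X i j x - X j i x)"

definition d1 :: "('n::finite) cform \<Rightarrow> 'n ctens" where
  "d1 xi = (\<lambda>a b x. \<Sum>m\<in>UNIV. wedge (\<lambda>k. pd k (xi m)) (dx m) a b x)"

definition Sop :: "('n::finite \<Rightarrow> 'n \<Rightarrow> 'n \<Rightarrow> real^'n \<Rightarrow> real) \<Rightarrow> 'n cform \<Rightarrow> 'n ctens" where
  "Sop S xi = (\<lambda>n m x. \<Sum>p\<in>UNIV. xi p x * of_real (S p n m x))"

definition fmul :: "(real^'n \<Rightarrow> real) \<Rightarrow> 'n cform \<Rightarrow> 'n cform" where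
  "fmul f xi = (\<lambda>m x. of_real (f x) * xi m x)"

definition fmul2 :: "(real^'n \<Rightarrow> real) \<Rightarrow> 'n ctens \<Rightarrow> 'n ctens" where
  "fmul2 f X = (\<lambda>a b x. of_real (f x) * X a b x)"

definition cl :: "'n cform \<Rightarrow> 'n lform" where "cl xi = (xi, (\<lambda>_ _. 0))"

definition lam :: "'n lform \<Rightarrow> 'n lform" where "lam xi = ((\<lambda>_ _. 0), fst xi)"

definition lfmul :: "(real^'n \<Rightarrow> real) \<Rightarrow> 'n lform \<Rightarrow> 'n lform" where
  "lfmul f xi = (fmul f (fst xi), fmul f (snd xi))"

definition lcov :: "('n::finite \<Rightarrow> 'n \<Rightarrow> 'n \<Rightarrow> real^'n \<Rightarrow> real) \<Rightarrow> 'n \<Rightarrow> 'n lform \<Rightarrow> 'n lform" where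
  "lcov Gam i xi = (cov Gam i (fst xi), cov Gam i (snd xi))"

definition lsub :: "'n lform \<Rightarrow> 'n lform \<Rightarrow> 'n lform" where
  "lsub a b = (fst a - fst b, snd a - snd b)"

definition lwedge :: "'n lform \<Rightarrow> 'n lform \<Rightarrow> 'n ltens" where
  "lwedge a b = (wedge (fst a) (fst b), wedge (fst a) (snd b) + wedge (snd a) (fst b))"

definition Hform :: "('n::finite \<Rightarrow> 'n \<Rightarrow> 'n \<Rightarrow> real^'n \<Rightarrow> real) \<Rightarrow> ('n \<Rightarrow> 'n \<Rightarrow> real^'n \<Rightarrow> real)
     \<Rightarrow> 'n \<Rightarrow> 'n \<Rightarrow> 'n ctens" where
  "Hform Gam om i j = (\<lambda>a b x. \<Sum>m\<in>UNIV. \<Sum>n\<in>UNIV. \<Sum>s\<in>UNIV.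
      of_real ((1/4) * om i s x * (tors_cd Gam j n m s x - 2 * curv Gam j n m s x))
      * wedge (dx m) (dx n) a b x)"

(* xi /\_1 eta for 1-forms xi, eta in Omega^1 A_1:
   xi /\ eta + lambda/2 omega^{ij} nabla_i xi /\ nabla_j eta
   + lambda (-1)^{|xi|+1} H^{ij} /\ (d_i -| xi) /\ (d_j -| eta),   |xi| = 1,
   where d_i -| xi = xi_i is a function *)
definition wedge1 :: "('n::finite \<Rightarrow> 'n \<Rightarrow> 'n \<Rightarrow> real^'n \<Rightarrow> real) \<Rightarrow> ('n \<Rightarrow> 'n \<Rightarrow> real^'n \<Rightarrow> real)
     \<Rightarrow> 'n lform \<Rightarrow> 'n lform \<Rightarrow> 'n ltens" where
  "wedge1 Gam om xi eta = lwedge xi eta +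
     ((\<lambda>_ _ _. 0),
      (\<lambda>a b x. (\<Sum>i\<in>UNIV. \<Sum>j\<in>UNIV.
          of_real (1/2) * fmul2 (om i j) (wedge (cov Gam i (fst xi)) (cov Gam j (fst eta))) a b x)
        + (\<Sum>i\<in>UNIV. \<Sum>j\<in>UNIV.
          (-1::complex) ^ (1 + 1) * Hform Gam om i j a b x * fst xi i x * fst eta j x)))"

definition wedge1_sum :: "('n::finite \<Rightarrow> 'n \<Rightarrow> 'n \<Rightarrow> real^'n \<Rightarrow> real) \<Rightarrow> ('n \<Rightarrow> 'n \<Rightarrow> real^'n \<Rightarrow> real)
     \<Rightarrow> 'n tens1 \<Rightarrow> 'n ltens" where
  "wedge1_sum Gam om T = sum_mset (image_mset (\<lambda>(xi, eta). wedge1 Gam om xi eta) T)"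

(* q^{-1}(xi (x)_0 eta) = xi (x)_1 eta - lambda/2 omega^{ij} nabla_i xi (x)_1 nabla_j eta *)
definition qinv :: "('n::finite \<Rightarrow> 'n \<Rightarrow> 'n \<Rightarrow> real^'n \<Rightarrow> real) \<Rightarrow> ('n \<Rightarrow> 'n \<Rightarrow> real^'n \<Rightarrow> real)
     \<Rightarrow> 'n lform \<Rightarrow> 'n lform \<Rightarrow> 'n tens1" where
  "qinv Gam om xi eta = {# (xi, eta) #} +
     image_mset (\<lambda>(i, j). (lam (lfmul (\<lambda>x. - (1/2) * om i j x) (lcov Gam i xi)), lcov Gam j eta))
       (mset_set UNIV)"

(* q^{-1} of a general element X = X_{ab} dx^a (x)_0 dx^b = sum_b (X_{ab} dx^a) (x)_0 dx^b *)
definition qinvT :: "('n::finite \<Rightarrow> 'n \<Rightarrow> 'n \<Rightarrow> real^'n \<Rightarrow> real) \<Rightarrow> ('n \<Rightarrow> 'n \<Rightarrow> real^'n \<Rightarrow> real)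
     \<Rightarrow> 'n ltens \<Rightarrow> 'n tens1" where
  "qinvT Gam om X = (\<Sum>b\<in>UNIV. qinv Gam om ((\<lambda>a. fst X a b), (\<lambda>a. snd X a b)) (cl (dx b)))"

(* nabla_Q xi = q^{-1}(dx^k (x)_0 nabla_k xi) - lambda/2 omega^{ij} dx^k (x)_1 [nabla_k, nabla_j] nabla_i xi *)
definition nablaQ :: "('n::finite \<Rightarrow> 'n \<Rightarrow> 'n \<Rightarrow> real^'n \<Rightarrow> real) \<Rightarrow> ('n \<Rightarrow> 'n \<Rightarrow> real^'n \<Rightarrow> real)
     \<Rightarrow> 'n lform \<Rightarrow> 'n tens1" where
  "nablaQ Gam om xi =
     (\<Sum>k\<in>UNIV. qinv Gam om (cl (dx k)) (lcov Gam k xi)) +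
     (\<Sum>i\<in>UNIV. \<Sum>j\<in>UNIV. \<Sum>k\<in>UNIV.
        {# (lam (lfmul (\<lambda>x. - (1/2) * om i j x) (cl (dx k))),
            lsub (lcov Gam k (lcov Gam j (lcov Gam i xi))) (lcov Gam j (lcov Gam k (lcov Gam i xi)))) #})"

definition nabS :: "('n::finite \<Rightarrow> 'n \<Rightarrow> 'n \<Rightarrow> real^'n \<Rightarrow> real) \<Rightarrow> ('n \<Rightarrow> 'n \<Rightarrow> 'n \<Rightarrow> real^'n \<Rightarrow> real)
     \<Rightarrow> 'n \<Rightarrow> 'n cform \<Rightarrow> 'n ctens" where
  "nabS Gam S j xi = (\<lambda>a b x. cov2 Gam j (Sop S xi) a b x - Sop S (cov Gam j xi) a b x)"

definition nabnabS :: "('n::finite \<Rightarrow> 'n \<Rightarrow> 'n \<Rightarrow> real^'n \<Rightarrow> real) \<Rightarrow> ('n \<Rightarrow> 'n \<Rightarrow> 'n \<Rightarrow> real^'n \<Rightarrow> real)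
     \<Rightarrow> 'n \<Rightarrow> 'n \<Rightarrow> 'n cform \<Rightarrow> 'n ctens" where
  "nabnabS Gam S i j xi = cov2 Gam i (nabS Gam S j xi)"

definition QS :: "('n::finite \<Rightarrow> 'n \<Rightarrow> 'n \<Rightarrow> real^'n \<Rightarrow> real) \<Rightarrow> ('n \<Rightarrow> 'n \<Rightarrow> real^'n \<Rightarrow> real)
     \<Rightarrow> ('n \<Rightarrow> 'n \<Rightarrow> 'n \<Rightarrow> real^'n \<Rightarrow> real) \<Rightarrow> 'n lform \<Rightarrow> 'n ltens" where
  "QS Gam om S xi = (Sop S (fst xi),
     (\<lambda>a b x. Sop S (snd xi) a b x
        + (\<Sum>i\<in>UNIV. \<Sum>j\<in>UNIV. of_real (1/2) * fmul2 (om i j) (nabnabS Gam S i j (fst xi)) a b x)))"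

definition nablaQS :: "('n::finite \<Rightarrow> 'n \<Rightarrow> 'n \<Rightarrow> real^'n \<Rightarrow> real) \<Rightarrow> ('n \<Rightarrow> 'n \<Rightarrow> real^'n \<Rightarrow> real)
     \<Rightarrow> ('n \<Rightarrow> 'n \<Rightarrow> 'n \<Rightarrow> real^'n \<Rightarrow> real) \<Rightarrow> 'n lform \<Rightarrow> 'n tens1" where
  "nablaQS Gam om S xi = nablaQ Gam om xi + qinvT Gam om (QS Gam om S xi)"

definition ld1 :: "('n::finite) lform \<Rightarrow> 'n ltens" where
  "ld1 xi = (d1 (fst xi), d1 (snd xi))"

definition qtorsion :: "('n::finite \<Rightarrow> 'n \<Rightarrow> 'n \<Rightarrow> real^'n \<Rightarrow> real) \<Rightarrow> ('n \<Rightarrow> 'n \<Rightarrow> real^'n \<Rightarrow> real)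
     \<Rightarrow> ('n \<Rightarrow> 'n \<Rightarrow> 'n \<Rightarrow> real^'n \<Rightarrow> real) \<Rightarrow> 'n lform \<Rightarrow> 'n ltens" where
  "qtorsion Gam om S xi = wedge1_sum Gam om (nablaQS Gam om S xi) - ld1 xi"

definition poisson_compatible :: "(real^'n::finite) set \<Rightarrow> ('n \<Rightarrow> 'n \<Rightarrow> real^'n \<Rightarrow> real)
     \<Rightarrow> ('n \<Rightarrow> 'n \<Rightarrow> 'n \<Rightarrow> real^'n \<Rightarrow> real) \<Rightarrow> bool" where
  "poisson_compatible U om Gam \<longleftrightarrow>
     (\<forall>i j x. x \<in> U \<longrightarrow> om i j x = - om j i x) \<and>
     (\<forall>i j k x. x \<in> U \<longrightarrow>
        (\<Sum>l\<in>UNIV. om i l x * pd l (om j k) x + om j l x * pd l (om k i) x + om k l x * pd l (om i j) x) = 0) \<and>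
     (\<forall>i j l x. x \<in> U \<longrightarrow>
        pd l (om i j) x
        - (\<Sum>k\<in>UNIV. om k j x * cov Gam k (dx i) l x)
        - (\<Sum>k\<in>UNIV. om i k x * cov Gam k (dx j) l x) = 0)"

(* nabla + S torsion free:  /\ (nabla xi + S xi) = d xi, with nabla xi = dx^k (x) nabla_k xi *)
definition torsion_free_plus :: "(real^'n::finite) set \<Rightarrow> ('n \<Rightarrow> 'n \<Rightarrow> 'n \<Rightarrow> real^'n \<Rightarrow> real)
     \<Rightarrow> ('n \<Rightarrow> 'n \<Rightarrow> 'n \<Rightarrow> real^'n \<Rightarrow> real) \<Rightarrow> bool" where
  "torsion_free_plus U Gam S \<longleftrightarrow>
     (\<forall>xi::'n cform. (\<forall>m. smooth_on U (xi m)) \<longrightarrow>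
        (\<forall>a b. \<forall>x\<in>U. wedgeT (\<lambda>k m y. cov Gam k xi m y + Sop S xi k m y) a b x = d1 xi a b x))"

definition Acoef :: "('n::finite \<Rightarrow> 'n \<Rightarrow> 'n \<Rightarrow> real^'n \<Rightarrow> real) \<Rightarrow> ('n \<Rightarrow> 'n \<Rightarrow> real^'n \<Rightarrow> real)
     \<Rightarrow> ('n \<Rightarrow> 'n \<Rightarrow> 'n \<Rightarrow> real^'n \<Rightarrow> real) \<Rightarrow> 'n \<Rightarrow> 'n \<Rightarrow> 'n \<Rightarrow> real^'n \<Rightarrow> real" where
  "Acoef Gam om S p n m x =
     (\<Sum>i\<in>UNIV. \<Sum>s\<in>UNIV. \<Sum>j\<in>UNIV. (1/4) * om i s x * (S p i j x + S p j i x)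
        * (tors_cd Gam j n m s x - curv Gam j n m s x + curv Gam j m n s x))
   - (\<Sum>i\<in>UNIV. \<Sum>j\<in>UNIV. \<Sum>s\<in>UNIV. (1/4) * om i j x
        * (tors Gam s n m x * curv Gam p s i j x - tors Gam p s m x * curv Gam s n i j x
           + tors Gam p s n x * curv Gam s m i j x))"

end

theory Submission
  imports Defs
begin

text \<open>Expanding \<open>\<and>\<^sub>1\<close> and \<open>q\<^sup>-\<^sup>1\<close> term by term,
  the \<open>\<lambda>\<^sup>0\<close>-part of the quantum torsion is the classical torsion of \<open>\<nabla> + S\<close>, which vanishes.
  In the \<open>\<lambda>\<^sup>1\<close>-part the terms in \<open>\<xi>\<^sub>1\<close> cancel for the same reason, and what is left is linear
  in \<open>\<nabla>\<xi>\<^sub>0\<close> and \<open>\<xi>\<^sub>0\<close>. The \<open>\<nabla>\<xi>\<^sub>0\<close>-terms come from \<open>H\<close>, from the curvature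
  correction in \<open>\<nabla>\<^sub>Q\<close> and from the Ricci identity applied to \<open>\<nabla>\<^sub>i\<nabla>\<^sub>j(S)\<close>; they cancel
  because \<open>T\<^sup>j\<^sub>n\<^sub>m\<^sub>;\<^sub>s\<close> is antisymmetric in \<open>n, m\<close>. The coefficient of \<open>\<xi>\<^sub>0\<close> is brought into
  the form \<open>A\<close> using that torsion freeness of \<open>\<nabla> + S\<close> means \<open>S\<^sup>p\<^sub>[\<^sub>a\<^sub>b\<^sub>] = T\<^sup>p\<^sub>a\<^sub>b\<close>
  (hence also for the covariant derivatives), and that \<open>\<omega>\<^sup>i\<^sup>s(T\<^sup>j\<^sub>b\<^sub>a\<^sub>;\<^sub>s - R\<^sup>j\<^sub>b\<^sub>a\<^sub>s + R\<^sup>j\<^sub>a\<^sub>b\<^sub>s)\<close>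
  is symmetric in \<open>i, j\<close>. The latter follows from Poisson compatibility: differentiating the
  compatibility condition once more, the symmetry of second partial derivatives of \<open>\<omega>\<close>
  yields exactly this symmetry.\<close>

section \<open>Partial derivatives\<close>

lemma pd_cong_open:
  assumes "open X" "x \<in> X" "\<And>y. y \<in> X \<Longrightarrow> f y = g y"
  shows "pd i f x = pd i g x"
proof -
  have "(f has_derivative f') (at x) \<longleftrightarrow> (g has_derivative f') (at x)" for f'
    using has_derivative_transform_within_open[of f _ x UNIV X g]
      has_derivative_transform_within_open[of g _ x UNIV X f] assms by auto
  then show ?thesis unfolding pd_def frechet_derivative_def by simp
qed

lemma iter_pd_cong_open:
  assumes "open X" "x \<in> X" "\<And>y. y \<in> X \<Longrightarrow> f y = g y"
  shows "iter_pd is f x = iter_pd is g x"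
  using assms(2)
proof (induction "is" arbitrary: x)
  case Nil
  then show ?case using assms by simp
next
  case (Cons i "is")
  then show ?case using pd_cong_open[OF assms(1) Cons.prems, of "iter_pd is f" "iter_pd is g"] by simp
qed

lemma iter_pd_snoc: "iter_pd (is @ [i]) f = iter_pd is (pd i f)"
  by (induction "is") auto

lemma pd_eqI:
  assumes "(f has_derivative f') (at x)"
  shows "pd i f x = f' (axis i 1)"
  unfolding pd_def frechet_derivative_at[OF assms] ..

lemma pd_add:
  assumes "f differentiable at x" "g differentiable at x"
  shows "pd i (\<lambda>y. f y + g y) x = pd i f x + pd i g x"
proof -
  have "((\<lambda>y. f y + g y) has_derivative
      (\<lambda>h. frechet_derivative f (at x) h + frechet_derivative g (at x) h)) (at x)"
    using assms by (intro has_derivative_add) (simp_all add: frechet_derivative_works)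
  then show ?thesis by (simp add: pd_eqI) (simp add: pd_def)
qed

lemma pd_diff:
  assumes "f differentiable at x" "g differentiable at x"
  shows "pd i (\<lambda>y. f y - g y) x = pd i f x - pd i g x"
proof -
  have "((\<lambda>y. f y - g y) has_derivative
      (\<lambda>h. frechet_derivative f (at x) h - frechet_derivative g (at x) h)) (at x)"
    using assms by (intro has_derivative_diff) (simp_all add: frechet_derivative_works)
  then show ?thesis by (simp add: pd_eqI) (simp add: pd_def)
qed

lemma pd_minus:
  assumes "f differentiable at x"
  shows "pd i (\<lambda>y. - f y) x = - pd i f x"
proof -
  have "((\<lambda>y. - f y) has_derivative (\<lambda>h. - frechet_derivative f (at x) h)) (at x)"
    using assms by (intro has_derivative_minus) (simp add: frechet_derivative_works)
  then show ?thesis by (simp add: pd_eqI) (simp add: pd_def)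
qed

lemma pd_mult:
  fixes f g :: "real^'n::finite \<Rightarrow> 'a::real_normed_algebra"
  assumes "f differentiable at x" "g differentiable at x"
  shows "pd i (\<lambda>y. f y * g y) x = pd i f x * g x + f x * pd i g x"
proof -
  have "((\<lambda>y. f y * g y) has_derivative
      (\<lambda>h. f x * frechet_derivative g (at x) h + frechet_derivative f (at x) h * g x)) (at x)"
    using assms by (intro has_derivative_mult) (simp_all add: frechet_derivative_works)
  then show ?thesis by (simp add: pd_eqI) (simp add: pd_def add.commute)
qed

lemma pd_const [simp]: "pd i (\<lambda>y. c) = (\<lambda>y. 0)"
  unfolding pd_def by (simp add: fun_eq_iff)

lemma pd_of_real:
  fixes f :: "real^'n::finite \<Rightarrow> real"
  assumes "f differentiable at x"
  shows "pd i (\<lambda>y. of_real (f y) :: 'a::real_normed_algebra_1) x = of_real (pd i f x)"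
proof -
  have "((\<lambda>y. of_real (f y) :: 'a) has_derivative (\<lambda>h. of_real (frechet_derivative f (at x) h))) (at x)"
    using assms by (intro has_derivative_of_real) (simp add: frechet_derivative_works)
  then show ?thesis by (simp add: pd_eqI) (simp add: pd_def)
qed

lemma pd_sum:
  assumes "\<And>k. k \<in> A \<Longrightarrow> f k differentiable at x"
  shows "pd i (\<lambda>y. \<Sum>k\<in>A. f k y) x = (\<Sum>k\<in>A. pd i (f k) x)"
proof (cases "finite A")
  case True
  then have "((\<lambda>y. \<Sum>k\<in>A. f k y) has_derivative (\<lambda>h. \<Sum>k\<in>A. frechet_derivative (f k) (at x) h)) (at x)"
    using assms by (intro has_derivative_sum) (simp add: frechet_derivative_works)
  then show ?thesis by (simp add: pd_eqI) (simp add: pd_def)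
qed simp

section \<open>Smooth functions\<close>

definition smooth_upto :: "nat \<Rightarrow> (real^'n::finite) set \<Rightarrow> (real^'n \<Rightarrow> 'a::real_normed_vector) \<Rightarrow> bool" where
  "smooth_upto k U f \<longleftrightarrow> (\<forall>is. length is \<le> k \<longrightarrow> iter_pd is f differentiable_on U)"

lemma smooth_on_iff_smooth_upto: "smooth_on U f \<longleftrightarrow> (\<forall>k. smooth_upto k U f)"
  unfolding smooth_on_def smooth_upto_def by auto

lemma smooth_upto_0: "smooth_upto 0 U f \<longleftrightarrow> f differentiable_on U"
  unfolding smooth_upto_def by auto

lemma smooth_upto_Suc:
  "smooth_upto (Suc k) U f \<longleftrightarrow> f differentiable_on U \<and> (\<forall>i. smooth_upto k U (pd i f))"
proof
  assume H: "smooth_upto (Suc k) U f"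
  have "smooth_upto k U (pd i f)" for i
    unfolding smooth_upto_def
  proof (intro allI impI)
    fix "is" :: "'a list"
    assume "length is \<le> k"
    then show "iter_pd is (pd i f) differentiable_on U"
      using H[unfolded smooth_upto_def, rule_format, of "is @ [i]"] by (simp add: iter_pd_snoc)
  qed
  with H[unfolded smooth_upto_def, rule_format, of "[]"]
  show "f differentiable_on U \<and> (\<forall>i. smooth_upto k U (pd i f))" by simp
next
  assume H: "f differentiable_on U \<and> (\<forall>i. smooth_upto k U (pd i f))"
  show "smooth_upto (Suc k) U f" unfolding smooth_upto_def
  proof (intro allI impI)
    fix js :: "'a list"
    assume "length js \<le> Suc k"
    then show "iter_pd js f differentiable_on U"
      using H by (cases js rule: rev_exhaust) (auto simp: smooth_upto_def iter_pd_snoc)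
  qed
qed

lemma differentiable_on_cong:
  "(\<And>y. y \<in> U \<Longrightarrow> f y = g y) \<Longrightarrow> f differentiable_on U \<Longrightarrow> g differentiable_on U"
  unfolding differentiable_on_def by (meson differentiable_transform_within zero_less_one)

lemma differentiable_on_of_real:
  "f differentiable_on U \<Longrightarrow> (\<lambda>y. of_real (f y) :: 'a::real_normed_algebra_1) differentiable_on U"
  by (rule differentiable_on_compose[OF _ bounded_linear_imp_differentiable_on[OF bounded_linear_of_real]])

lemma smooth_upto_cong_open:
  assumes "open U" "\<And>y. y \<in> U \<Longrightarrow> f y = g y" "smooth_upto k U f"
  shows "smooth_upto k U g"
  unfolding smooth_upto_def
proof (intro allI impI)
  fix "is" :: "'a list"
  assume "length is \<le> k"
  then have "iter_pd is f differentiable_on U" using assms(3) unfolding smooth_upto_def by blast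
  moreover have "\<And>y. y \<in> U \<Longrightarrow> iter_pd is f y = iter_pd is g y"
    by (rule iter_pd_cong_open[OF assms(1) _ assms(2)])
  ultimately show "iter_pd is g differentiable_on U" by (rule differentiable_on_cong[rotated])
qed

lemma smooth_upto_differentiable_at:
  "smooth_upto k U f \<Longrightarrow> open U \<Longrightarrow> x \<in> U \<Longrightarrow> f differentiable at x"
  unfolding smooth_upto_def
  by (metis differentiable_on_eq_differentiable_at iter_pd.simps(1) le0 list.size(3))

lemma smooth_upto_mono: "smooth_upto k U f \<Longrightarrow> j \<le> k \<Longrightarrow> smooth_upto j U f"
  unfolding smooth_upto_def by auto

lemma smooth_upto_const: "smooth_upto k U (\<lambda>y. c)"
  by (induction k arbitrary: c) (simp_all add: smooth_upto_0 smooth_upto_Suc)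

lemma smooth_upto_add:
  assumes "open U"
  shows "smooth_upto k U f \<Longrightarrow> smooth_upto k U g \<Longrightarrow> smooth_upto k U (\<lambda>y. f y + g y)"
proof (induction k arbitrary: f g)
  case 0
  then show ?case unfolding smooth_upto_0 by (rule differentiable_on_add)
next
  case (Suc k)
  have "smooth_upto k U (pd i (\<lambda>y. f y + g y))" for i
  proof (rule smooth_upto_cong_open[OF assms])
    show "smooth_upto k U (\<lambda>y. pd i f y + pd i g y)"
      using Suc by (simp add: smooth_upto_Suc)
    show "pd i f y + pd i g y = pd i (\<lambda>y. f y + g y) y" if "y \<in> U" for y
      using Suc.prems that by (intro pd_add[symmetric] smooth_upto_differentiable_at[OF _ assms])
  qed
  with Suc.prems show ?case by (simp add: smooth_upto_Suc)
qed

lemma smooth_upto_minus: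
  assumes "open U"
  shows "smooth_upto k U f \<Longrightarrow> smooth_upto k U (\<lambda>y. - f y)"
proof (induction k arbitrary: f)
  case 0
  then show ?case unfolding smooth_upto_0 by (rule differentiable_on_minus)
next
  case (Suc k)
  have "smooth_upto k U (pd i (\<lambda>y. - f y))" for i
  proof (rule smooth_upto_cong_open[OF assms])
    show "smooth_upto k U (\<lambda>y. - pd i f y)"
      using Suc by (simp add: smooth_upto_Suc)
    show "- pd i f y = pd i (\<lambda>y. - f y) y" if "y \<in> U" for y
      using Suc.prems that by (intro pd_minus[symmetric] smooth_upto_differentiable_at[OF _ assms])
  qed
  with Suc.prems show ?case by (simp add: smooth_upto_Suc)
qed

lemma smooth_upto_mult:
  fixes f g :: "real^'n::finite \<Rightarrow> 'a::real_normed_algebra"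
  assumes "open U"
  shows "smooth_upto k U f \<Longrightarrow> smooth_upto k U g \<Longrightarrow> smooth_upto k U (\<lambda>y. f y * g y)"
proof (induction k arbitrary: f g)
  case 0
  then show ?case unfolding smooth_upto_0 by (rule differentiable_on_mult)
next
  case (Suc k)
  have f: "smooth_upto k U f" and g: "smooth_upto k U g"
    using Suc.prems smooth_upto_mono[of "Suc k" U _ k] by auto
  have "smooth_upto k U (pd i (\<lambda>y. f y * g y))" for i
  proof (rule smooth_upto_cong_open[OF assms])
    show "smooth_upto k U (\<lambda>y. pd i f y * g y + f y * pd i g y)"
      using Suc f g by (intro smooth_upto_add[OF assms]) (simp_all add: smooth_upto_Suc)
    show "pd i f y * g y + f y * pd i g y = pd i (\<lambda>y. f y * g y) y" if "y \<in> U" for y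
      using Suc.prems that by (intro pd_mult[symmetric] smooth_upto_differentiable_at[OF _ assms])
  qed
  with Suc.prems show ?case by (simp add: smooth_upto_Suc)
qed

lemma smooth_upto_of_real:
  fixes f :: "real^'n::finite \<Rightarrow> real"
  assumes "open U"
  shows "smooth_upto k U f \<Longrightarrow> smooth_upto k U (\<lambda>y. of_real (f y) :: 'a::real_normed_algebra_1)"
proof (induction k arbitrary: f)
  case 0
  then show ?case unfolding smooth_upto_0 by (rule differentiable_on_of_real)
next
  case (Suc k)
  have "smooth_upto k U (pd i (\<lambda>y. of_real (f y) :: 'a))" for i
  proof (rule smooth_upto_cong_open[OF assms])
    show "smooth_upto k U (\<lambda>y. of_real (pd i f y) :: 'a)"
      using Suc by (simp add: smooth_upto_Suc)
    show "of_real (pd i f y) = pd i (\<lambda>y. of_real (f y) :: 'a) y" if "y \<in> U" for y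
      using Suc.prems that by (intro pd_of_real[symmetric] smooth_upto_differentiable_at[OF _ assms])
  qed
  with Suc.prems show ?case by (simp add: smooth_upto_Suc differentiable_on_of_real)
qed

lemma smooth_upto_sum:
  assumes "open U"
  shows "(\<And>a. a \<in> A \<Longrightarrow> smooth_upto k U (f a)) \<Longrightarrow> smooth_upto k U (\<lambda>y. \<Sum>a\<in>A. f a y)"
proof (induction A rule: infinite_finite_induct)
  case (insert a A)
  then show ?case using smooth_upto_add[OF assms, of k "f a" "\<lambda>y. \<Sum>a\<in>A. f a y"] by simp
qed (simp_all add: smooth_upto_const)

lemma smooth_const: "smooth_on U (\<lambda>y. c)"
  by (simp add: smooth_on_iff_smooth_upto smooth_upto_const)

lemma smooth_add: "open U \<Longrightarrow> smooth_on U f \<Longrightarrow> smooth_on U g \<Longrightarrow> smooth_on U (\<lambda>y. f y + g y)"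
  by (simp add: smooth_on_iff_smooth_upto smooth_upto_add)

lemma smooth_minus: "open U \<Longrightarrow> smooth_on U f \<Longrightarrow> smooth_on U (\<lambda>y. - f y)"
  by (simp add: smooth_on_iff_smooth_upto smooth_upto_minus)

lemma smooth_diff: "open U \<Longrightarrow> smooth_on U f \<Longrightarrow> smooth_on U g \<Longrightarrow> smooth_on U (\<lambda>y. f y - g y)"
  unfolding diff_conv_add_uminus by (intro smooth_add smooth_minus)

lemma smooth_mult:
  "open U \<Longrightarrow> smooth_on U f \<Longrightarrow> smooth_on U g \<Longrightarrow> smooth_on U (\<lambda>y. (f y :: 'a::real_normed_algebra) * g y)"
  by (simp add: smooth_on_iff_smooth_upto smooth_upto_mult)

lemma smooth_of_real:
  "open U \<Longrightarrow> smooth_on U f \<Longrightarrow> smooth_on U (\<lambda>y. of_real (f y) :: 'a::real_normed_algebra_1)"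
  by (simp add: smooth_on_iff_smooth_upto smooth_upto_of_real)

lemma smooth_sum: "open U \<Longrightarrow> (\<And>a. a \<in> A \<Longrightarrow> smooth_on U (f a)) \<Longrightarrow> smooth_on U (\<lambda>y. \<Sum>a\<in>A. f a y)"
  by (simp add: smooth_on_iff_smooth_upto smooth_upto_sum)

lemma smooth_pd: "smooth_on U f \<Longrightarrow> smooth_on U (pd i f)"
  by (meson smooth_on_iff_smooth_upto smooth_upto_Suc)

lemma smooth_differentiable_at: "smooth_on U f \<Longrightarrow> open U \<Longrightarrow> x \<in> U \<Longrightarrow> f differentiable at x"
  by (meson smooth_on_iff_smooth_upto smooth_upto_differentiable_at)

section \<open>Symmetry of second partial derivatives\<close>

lemma second_difference_estimate:
  fixes f :: "real^'n::finite \<Rightarrow> 'a::real_normed_vector"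
  assumes U: "open U" "x \<in> U"
    and fd: "\<And>y. y \<in> U \<Longrightarrow> f differentiable at y"
    and gd: "pd i f differentiable at x"
    and e: "e > 0"
  shows "\<exists>\<delta>>0. \<forall>h. 0 < h \<and> h < \<delta> \<longrightarrow>
     norm (f (x + h *\<^sub>R axis i 1 + h *\<^sub>R axis j 1) - f (x + h *\<^sub>R axis i 1) - f (x + h *\<^sub>R axis j 1) + f x
        - (h * h) *\<^sub>R pd j (pd i f) x) \<le> e * (h * h)"
proof -
  define g where "g = pd i f"
  define L where "L = frechet_derivative g (at x)"
  define ei where "ei = axis i (1::real)"
  define ej where "ej = axis j (1::real)"
  define c where "c = pd j (pd i f) x"
  have gL: "(g has_derivative L) (at x)" using gd unfolding g_def L_def by (simp add: frechet_derivative_works)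
  have cL: "c = L ej" unfolding c_def L_def g_def ej_def pd_def ..
  have bl: "bounded_linear L" using gL by (rule has_derivative_bounded_linear)
  from gL[unfolded has_derivative_at_alt] e obtain d where d: "d > 0"
    "\<And>y. norm (y - x) < d \<Longrightarrow> norm (g y - g x - L (y - x)) \<le> (e/3) * norm (y - x)"
    by (meson divide_pos_pos zero_less_numeral)
  from U obtain r where r: "r > 0" "ball x r \<subseteq> U" using open_contains_ball by blast
  define \<delta> where "\<delta> = min (d/2) (r/2)"
  have "\<delta> > 0" using d r by (simp add: \<delta>_def)
  moreover have "norm (f (x + h *\<^sub>R ei + h *\<^sub>R ej) - f (x + h *\<^sub>R ei) - f (x + h *\<^sub>R ej) + f x
        - (h * h) *\<^sub>R c) \<le> e * (h * h)" if h: "0 < h" "h < \<delta>" for h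
  proof -
    \<comment> \<open>mean value inequality for \<open>\<phi>\<close>, whose derivative is controlled by the differentiability of \<open>pd i f\<close> at \<open>x\<close>\<close>
    define \<phi> where "\<phi> = (\<lambda>s::real. f (x + s *\<^sub>R ei + h *\<^sub>R ej) - f (x + s *\<^sub>R ei) - (s * h) *\<^sub>R c)"
    define D where "D = (\<lambda>s (t::real). t *\<^sub>R (g (x + s *\<^sub>R ei + h *\<^sub>R ej) - g (x + s *\<^sub>R ei) - h *\<^sub>R c))"
    have nb: "norm (s *\<^sub>R ei + t *\<^sub>R ej) \<le> \<bar>s\<bar> + \<bar>t\<bar>" for s t
      using norm_triangle_ineq[of "s *\<^sub>R ei" "t *\<^sub>R ej"] by (simp add: ei_def ej_def)
    have inU: "x + s *\<^sub>R ei + t *\<^sub>R ej \<in> U" if "\<bar>s\<bar> \<le> h" "\<bar>t\<bar> \<le> h" for s t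
    proof -
      have "norm (s *\<^sub>R ei + t *\<^sub>R ej) < r" using nb[of s t] that h r unfolding \<delta>_def by linarith
      moreover have "dist x (x + s *\<^sub>R ei + t *\<^sub>R ej) = norm (s *\<^sub>R ei + t *\<^sub>R ej)"
        by (metis add.assoc add_diff_cancel_left' dist_commute dist_norm)
      ultimately have "x + s *\<^sub>R ei + t *\<^sub>R ej \<in> ball x r" by simp
      then show ?thesis using r by blast
    qed
    have der: "(\<phi> has_derivative D s) (at s within {0..h})" if s: "s \<in> {0..h}" for s
    proof -
      have p1: "x + s *\<^sub>R ei + h *\<^sub>R ej \<in> U" using inU[of s h] s h by auto
      have p2: "x + s *\<^sub>R ei \<in> U" using inU[of s 0] s h by auto
      have F1: "(f has_derivative frechet_derivative f (at (x + s *\<^sub>R ei + h *\<^sub>R ej))) (at (x + s *\<^sub>R ei + h *\<^sub>R ej))"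
        using fd[OF p1] by (simp add: frechet_derivative_works)
      have F2: "(f has_derivative frechet_derivative f (at (x + s *\<^sub>R ei))) (at (x + s *\<^sub>R ei))"
        using fd[OF p2] by (simp add: frechet_derivative_works)
      have l1: "((\<lambda>s. x + s *\<^sub>R ei + h *\<^sub>R ej) has_derivative (\<lambda>t. t *\<^sub>R ei)) (at s within {0..h})"
        by (auto intro!: derivative_eq_intros)
      have l2: "((\<lambda>s. x + s *\<^sub>R ei) has_derivative (\<lambda>t. t *\<^sub>R ei)) (at s within {0..h})"
        by (auto intro!: derivative_eq_intros)
      have c1: "((\<lambda>s. f (x + s *\<^sub>R ei + h *\<^sub>R ej)) has_derivative
          (\<lambda>t. frechet_derivative f (at (x + s *\<^sub>R ei + h *\<^sub>R ej)) (t *\<^sub>R ei))) (at s within {0..h})"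
        using has_derivative_compose[OF l1 F1] by simp
      have c2: "((\<lambda>s. f (x + s *\<^sub>R ei)) has_derivative
          (\<lambda>t. frechet_derivative f (at (x + s *\<^sub>R ei)) (t *\<^sub>R ei))) (at s within {0..h})"
        using has_derivative_compose[OF l2 F2] by simp
      have c3: "((\<lambda>s. (s * h) *\<^sub>R c) has_derivative (\<lambda>t. (t * h) *\<^sub>R c)) (at s within {0..h})"
        by (auto intro!: derivative_eq_intros)
      have "(\<phi> has_derivative (\<lambda>t. frechet_derivative f (at (x + s *\<^sub>R ei + h *\<^sub>R ej)) (t *\<^sub>R ei)
               - frechet_derivative f (at (x + s *\<^sub>R ei)) (t *\<^sub>R ei) - (t * h) *\<^sub>R c)) (at s within {0..h})"
        unfolding \<phi>_def by (intro has_derivative_diff c1 c2 c3)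
      moreover have "(\<lambda>t. frechet_derivative f (at (x + s *\<^sub>R ei + h *\<^sub>R ej)) (t *\<^sub>R ei)
               - frechet_derivative f (at (x + s *\<^sub>R ei)) (t *\<^sub>R ei) - (t * h) *\<^sub>R c) = D s"
      proof
        fix t
        have "frechet_derivative f (at (x + s *\<^sub>R ei + h *\<^sub>R ej)) (t *\<^sub>R ei) = t *\<^sub>R g (x + s *\<^sub>R ei + h *\<^sub>R ej)"
          using linear_scale[OF has_derivative_linear[OF F1]] unfolding g_def pd_def ei_def by simp
        moreover have "frechet_derivative f (at (x + s *\<^sub>R ei)) (t *\<^sub>R ei) = t *\<^sub>R g (x + s *\<^sub>R ei)"
          using linear_scale[OF has_derivative_linear[OF F2]] unfolding g_def pd_def ei_def by simp
        ultimately show "frechet_derivative f (at (x + s *\<^sub>R ei + h *\<^sub>R ej)) (t *\<^sub>R ei)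
               - frechet_derivative f (at (x + s *\<^sub>R ei)) (t *\<^sub>R ei) - (t * h) *\<^sub>R c = D s t"
          unfolding D_def by (simp add: scaleR_diff_right)
      qed
      ultimately show ?thesis by simp
    qed
    have bnd: "onorm (D s) \<le> e * h" if s: "s \<in> {0..h}" for s
    proof -
      let ?v = "g (x + s *\<^sub>R ei + h *\<^sub>R ej) - g (x + s *\<^sub>R ei) - h *\<^sub>R c"
      have a1: "norm (g (x + s *\<^sub>R ei + h *\<^sub>R ej) - g x - L (s *\<^sub>R ei + h *\<^sub>R ej)) \<le> (e/3) * (2*h)"
      proof -
        have n: "norm (s *\<^sub>R ei + h *\<^sub>R ej) \<le> 2*h" using nb[of s h] s h by auto
        have "norm (s *\<^sub>R ei + h *\<^sub>R ej) < d" using n h unfolding \<delta>_def by linarith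
        then have "norm (g (x + s *\<^sub>R ei + h *\<^sub>R ej) - g x - L (s *\<^sub>R ei + h *\<^sub>R ej)) \<le> (e/3) * norm (s *\<^sub>R ei + h *\<^sub>R ej)"
          using d(2)[of "x + s *\<^sub>R ei + h *\<^sub>R ej"] by (simp add: add.assoc)
        also have "\<dots> \<le> (e/3) * (2*h)" using n e by (intro mult_left_mono) auto
        finally show ?thesis .
      qed
      have a2: "norm (g (x + s *\<^sub>R ei) - g x - L (s *\<^sub>R ei)) \<le> (e/3) * h"
      proof -
        have n: "norm (s *\<^sub>R ei) \<le> h" using s by (simp add: ei_def)
        have "norm (s *\<^sub>R ei) < d" using n h unfolding \<delta>_def by linarith
        then have "norm (g (x + s *\<^sub>R ei) - g x - L (s *\<^sub>R ei)) \<le> (e/3) * norm (s *\<^sub>R ei)"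
          using d(2)[of "x + s *\<^sub>R ei"] by simp
        also have "\<dots> \<le> (e/3) * h" using n e by (intro mult_left_mono) auto
        finally show ?thesis .
      qed
      have "L (s *\<^sub>R ei + h *\<^sub>R ej) - L (s *\<^sub>R ei) = h *\<^sub>R c"
        using bl cL by (simp add: linear_simps)
      then have "?v = (g (x + s *\<^sub>R ei + h *\<^sub>R ej) - g x - L (s *\<^sub>R ei + h *\<^sub>R ej)) - (g (x + s *\<^sub>R ei) - g x - L (s *\<^sub>R ei))"
        by (simp add: algebra_simps)
      then have "norm ?v \<le> (e/3) * (2*h) + (e/3) * h"
        using norm_triangle_ineq4 a1 a2 by (smt (verit))
      then have nv: "norm ?v \<le> e * h" by simp
      show ?thesis
      proof (rule onorm_bound)
        show "0 \<le> e * h" using e h by simp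
        fix t :: real
        show "norm (D s t) \<le> e * h * norm t"
          unfolding D_def using nv by (simp add: mult.commute mult_left_mono)
      qed
    qed
    have "norm (\<phi> h - \<phi> 0) \<le> (e * h) * norm (h - 0)"
      by (rule differentiable_bound[of "{0..h}" \<phi> D "e*h"]) (use der bnd h in auto)
    moreover have "\<phi> h - \<phi> 0 = f (x + h *\<^sub>R ei + h *\<^sub>R ej) - f (x + h *\<^sub>R ei) - f (x + h *\<^sub>R ej) + f x - (h * h) *\<^sub>R c"
      unfolding \<phi>_def by simp
    ultimately show ?thesis using h by (simp add: mult.assoc)
  qed
  ultimately show ?thesis unfolding ei_def ej_def c_def by blast
qed

lemma pd_commute:
  fixes f :: "real^'n::finite \<Rightarrow> 'a::real_normed_vector"
  assumes U: "open U" "x \<in> U" and sm: "smooth_upto 2 U f"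
  shows "pd i (pd j f) x = pd j (pd i f) x"
proof -
  have fd: "\<And>y. y \<in> U \<Longrightarrow> f differentiable at y" using smooth_upto_differentiable_at[OF sm U(1)] by blast
  have s1: "smooth_upto 1 U (pd i f)" "smooth_upto 1 U (pd j f)" using sm by (simp_all add: numeral_2_eq_2 smooth_upto_Suc)
  have gi: "pd i f differentiable at x" using smooth_upto_differentiable_at[OF s1(1) U] .
  have gj: "pd j f differentiable at x" using smooth_upto_differentiable_at[OF s1(2) U] .
  let ?c = "pd j (pd i f) x" and ?c' = "pd i (pd j f) x"
  let ?D = "\<lambda>h. f (x + h *\<^sub>R axis i 1 + h *\<^sub>R axis j 1) - f (x + h *\<^sub>R axis i 1) - f (x + h *\<^sub>R axis j 1) + f x"
  have sym: "f (x + h *\<^sub>R axis j 1 + h *\<^sub>R axis i 1) - f (x + h *\<^sub>R axis j 1) - f (x + h *\<^sub>R axis i 1) + f x = ?D h" for h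
    by (simp add: algebra_simps)
  have "norm (?c' - ?c) \<le> 2 * e" if e: "e > 0" for e
  proof -
    obtain d1 where d1: "d1 > 0" "\<And>h. 0 < h \<and> h < d1 \<Longrightarrow> norm (?D h - (h * h) *\<^sub>R ?c) \<le> e * (h * h)"
      using second_difference_estimate[OF U fd gi e, of j] by blast
    obtain d2 where d2: "d2 > 0" "\<And>h. 0 < h \<and> h < d2 \<Longrightarrow> norm (?D h - (h * h) *\<^sub>R ?c') \<le> e * (h * h)"
      using second_difference_estimate[OF U fd gj e, of i] unfolding sym by blast
    define h where "h = min d1 d2 / 2"
    have h: "0 < h" "h < d1" "h < d2" using d1 d2 by (auto simp: h_def)
    have "norm ((h * h) *\<^sub>R (?c' - ?c)) \<le> norm (?D h - (h * h) *\<^sub>R ?c) + norm (?D h - (h * h) *\<^sub>R ?c')"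
      using norm_triangle_ineq4[of "?D h - (h * h) *\<^sub>R ?c" "?D h - (h * h) *\<^sub>R ?c'"]
      by (simp add: algebra_simps)
    also have "\<dots> \<le> e * (h * h) + e * (h * h)" using d1(2) d2(2) h by (meson add_mono)
    finally have F: "norm ((h * h) *\<^sub>R (?c' - ?c)) \<le> e * (h * h) + e * (h * h)" .
    have "norm ((h * h) *\<^sub>R (?c' - ?c)) = (h * h) * norm (?c' - ?c)" using h by (simp only: norm_scaleR) simp
    with F have "(h * h) * norm (?c' - ?c) \<le> (h * h) * (2 * e)" by (simp add: algebra_simps)
    then show ?thesis using h by (simp add: mult_le_cancel_left_pos)
  qed
  note approx = this
  have "norm (?c' - ?c) \<le> 0"
  proof (rule field_le_epsilon)
    fix e :: real
    assume "e > 0"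
    then show "norm (?c' - ?c) \<le> 0 + e" using approx[of "e/2"] by simp
  qed
  then show ?thesis by simp
qed

lemma smooth_pd_commute: "open U \<Longrightarrow> x \<in> U \<Longrightarrow> smooth_on U f \<Longrightarrow> pd i (pd j f) x = pd j (pd i f) x"
  by (meson pd_commute smooth_on_iff_smooth_upto)

lemma mult_if_delta:
  "(if P then 1 else 0) * x = (if P then x else (0::'a::semiring_1))"
  "x * (if P then 1 else 0) = (if P then x else 0)"
  by simp_all

lemma wedge_dx_left: "(\<Sum>k\<in>UNIV. wedge (dx k) (F k) a b x) = F a b x - F b a x"
  by (simp add: wedge_def dx_def sum_subtractf mult_if_delta)

lemma wedge_dx_right: "(\<Sum>c\<in>UNIV. wedge (\<lambda>a. X a c) (dx c) a b x) = X a b x - X b a x"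
  by (simp add: wedge_def dx_def sum_subtractf mult_if_delta)

lemma sum_wedge_dx_dx:
  "(\<Sum>m\<in>UNIV. \<Sum>n\<in>UNIV. (F::'n::finite \<Rightarrow> 'n \<Rightarrow> complex) m n * wedge (dx m) (dx n) a b x) = F a b - F b a"
proof -
  have "(\<Sum>m\<in>UNIV. \<Sum>n\<in>UNIV. F m n * wedge (dx m) (dx n) a b x)
      = (\<Sum>m\<in>UNIV. (if a = m then 1 else 0) * (\<Sum>n\<in>UNIV. (if b = n then 1 else 0) * F m n))
      - (\<Sum>m\<in>UNIV. (if b = m then 1 else 0) * (\<Sum>n\<in>UNIV. (if a = n then 1 else 0) * F m n))"
    by (simp add: wedge_def dx_def algebra_simps sum_subtractf sum_distrib_left)
  then show ?thesis by (simp add: mult_if_delta)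
qed

lemma sum_wedge_dx_dx_coefficients:
  fixes z :: "'n::finite \<Rightarrow> complex" and A :: "'n \<Rightarrow> 'n \<Rightarrow> 'n \<Rightarrow> real"
  shows "of_real (1/2) * (\<Sum>p\<in>UNIV. \<Sum>n\<in>UNIV. \<Sum>m\<in>UNIV. z p * of_real (A p n m) * wedge (dx m) (dx n) a b x)
     = (\<Sum>p\<in>UNIV. z p * of_real ((1/2) * (A p b a - A p a b)))"
proof -
  have "(\<Sum>n\<in>UNIV. \<Sum>m\<in>UNIV. z p * of_real (A p n m) * wedge (dx m) (dx n) a b x)
     = z p * (\<Sum>m\<in>UNIV. \<Sum>n\<in>UNIV. of_real (A p n m) * wedge (dx m) (dx n) a b x)" for p
    by (subst sum.swap) (simp add: sum_distrib_left mult_ac)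
  then show ?thesis unfolding sum_wedge_dx_dx by (simp add: sum_distrib_left mult_ac)
qed

lemma sum_dx_left: "(\<Sum>k\<in>UNIV. (H::complex) * dx k i x * C k) = H * C i"
proof -
  have "(\<Sum>k\<in>UNIV. H * dx k i x * C k) = (\<Sum>k\<in>UNIV. (if i = k then 1 else 0) * (H * C k))"
    by (rule sum.cong) (auto simp: dx_def)
  then show ?thesis by (simp add: mult_if_delta)
qed

lemma sum_dx_right: "(\<Sum>k\<in>UNIV. (H::complex) * C k * dx k j x) = H * C j"
proof -
  have "(\<Sum>k\<in>UNIV. H * C k * dx k j x) = (\<Sum>k\<in>UNIV. (if j = k then 1 else 0) * (H * C k))"
    by (rule sum.cong) (auto simp: dx_def)
  then show ?thesis by (simp add: mult_if_delta)
qed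

lemma wedge_zero_left: "wedge (\<lambda>_ _. 0) v a b x = 0"
  by (simp add: wedge_def)

lemma wedge_zero_right: "wedge u (\<lambda>_ _. 0) a b x = 0"
  by (simp add: wedge_def)

lemma wedge_fmul_left: "wedge (fmul f u) v a b x = of_real (f x) * wedge u v a b x"
  by (simp add: wedge_def fmul_def algebra_simps)

lemma d1_dx: "d1 (dx p :: 'n::finite \<Rightarrow> real^'n \<Rightarrow> complex) a b x = 0"
  by (simp add: d1_def dx_def wedge_def)

lemma sum_mult_sum_commute:
  "(\<Sum>l\<in>UNIV. (P::'n::finite \<Rightarrow> 'a::comm_ring_1) l * (\<Sum>q\<in>UNIV. G q * H q l))
     = (\<Sum>q\<in>UNIV. G q * (\<Sum>l\<in>UNIV. H q l * P l))"
  unfolding sum_distrib_left by (subst sum.swap) (simp add: mult_ac)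

lemma sum_mult_sum_transpose:
  "(\<Sum>k\<in>UNIV. (F::'n::finite \<Rightarrow> 'a::comm_ring_1) k * (\<Sum>l\<in>UNIV. G l * P k l))
     = (\<Sum>k\<in>UNIV. G k * (\<Sum>l\<in>UNIV. F l * P l k))"
  unfolding sum_distrib_left by (subst sum.swap) (simp add: mult_ac)

lemma sum_antisym_weight:
  fixes w :: "'n::finite \<Rightarrow> 'n \<Rightarrow> 'a::field_char_0"
  assumes "\<And>i j. w i j = - w j i"
  shows "(\<Sum>i\<in>UNIV. \<Sum>j\<in>UNIV. w i j * F i j) = (1/2) * (\<Sum>i\<in>UNIV. \<Sum>j\<in>UNIV. w i j * (F i j - F j i))"
proof -
  have "(\<Sum>i\<in>UNIV. \<Sum>j\<in>UNIV. w i j * F j i) = (\<Sum>j\<in>UNIV. \<Sum>i\<in>UNIV. w i j * F j i)"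
    by (rule sum.swap)
  also have "\<dots> = - (\<Sum>j\<in>UNIV. \<Sum>i\<in>UNIV. w j i * F j i)"
    by (subst assms) (simp add: sum_negf)
  finally show ?thesis by (simp add: right_diff_distrib sum_subtractf)
qed

lemma sum_cancel_transposed:
  assumes "\<And>k m. g m k = - f k m"
  shows "(\<Sum>k\<in>UNIV. \<Sum>m\<in>UNIV. (f::'n::finite \<Rightarrow> 'n \<Rightarrow> 'a::ab_group_add) k m + g k m) = 0"
proof -
  have "(\<Sum>k\<in>UNIV. \<Sum>m\<in>UNIV. g k m) = (\<Sum>m\<in>UNIV. \<Sum>k\<in>UNIV. g k m)" by (rule sum.swap)
  also have "\<dots> = - (\<Sum>m\<in>UNIV. \<Sum>k\<in>UNIV. f m k)" using assms by (simp add: sum_negf)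
  finally show ?thesis by (simp add: sum.distrib)
qed

lemma sum_swap_inner:
  "(\<Sum>i\<in>UNIV. \<Sum>j\<in>UNIV. \<Sum>p\<in>UNIV. (F::'n::finite\<Rightarrow>'n\<Rightarrow>'n\<Rightarrow>'a::comm_monoid_add) i j p)
     = (\<Sum>i\<in>UNIV. \<Sum>p\<in>UNIV. \<Sum>j\<in>UNIV. F i j p)"
  by (rule sum.cong[OF refl], rule sum.swap)

lemma sum_rotate3:
  "(\<Sum>k\<in>UNIV. \<Sum>i\<in>UNIV. \<Sum>j\<in>UNIV. (F::'n::finite\<Rightarrow>'n\<Rightarrow>'n\<Rightarrow>'a::comm_monoid_add) k i j)
     = (\<Sum>i\<in>UNIV. \<Sum>j\<in>UNIV. \<Sum>k\<in>UNIV. F k i j)"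
proof -
  have "(\<Sum>k\<in>UNIV. \<Sum>i\<in>UNIV. \<Sum>j\<in>UNIV. F k i j) = (\<Sum>i\<in>UNIV. \<Sum>k\<in>UNIV. \<Sum>j\<in>UNIV. F k i j)"
    by (rule sum.swap)
  also have "\<dots> = (\<Sum>i\<in>UNIV. \<Sum>j\<in>UNIV. \<Sum>k\<in>UNIV. F k i j)"
    by (rule sum_swap_inner)
  finally show ?thesis .
qed

lemma sum_rotate4:
  "(\<Sum>i\<in>UNIV. \<Sum>j\<in>UNIV. \<Sum>l\<in>UNIV. \<Sum>p\<in>UNIV. (F::'n::finite\<Rightarrow>'n\<Rightarrow>'n\<Rightarrow>'n\<Rightarrow>'a::comm_monoid_add) i j l p)
     = (\<Sum>p\<in>UNIV. \<Sum>i\<in>UNIV. \<Sum>j\<in>UNIV. \<Sum>l\<in>UNIV. F i j l p)"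
proof -
  have "(\<Sum>i\<in>UNIV. \<Sum>j\<in>UNIV. \<Sum>l\<in>UNIV. \<Sum>p\<in>UNIV. F i j l p)
      = (\<Sum>i\<in>UNIV. \<Sum>j\<in>UNIV. \<Sum>p\<in>UNIV. \<Sum>l\<in>UNIV. F i j l p)"
    by (intro sum.cong[OF refl] sum_swap_inner)
  also have "\<dots> = (\<Sum>i\<in>UNIV. \<Sum>p\<in>UNIV. \<Sum>j\<in>UNIV. \<Sum>l\<in>UNIV. F i j l p)"
    by (rule sum_swap_inner)
  also have "\<dots> = (\<Sum>p\<in>UNIV. \<Sum>i\<in>UNIV. \<Sum>j\<in>UNIV. \<Sum>l\<in>UNIV. F i j l p)"
    by (rule sum.swap)
  finally show ?thesis .
qed

section \<open>Covariant derivatives and curvature\<close>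

lemma cov_apply: "cov Gam i xi m x = pd i (xi m) x - (\<Sum>k\<in>UNIV. of_real (Gam k i m x) * xi k x)"
  by (simp add: cov_def)

lemma cov2_apply:
  "cov2 Gam i X a b x = pd i (X a b) x - (\<Sum>k\<in>UNIV. of_real (Gam k i a x) * X k b x)
     - (\<Sum>k\<in>UNIV. of_real (Gam k i b x) * X a k x)"
  by (simp add: cov2_def)

lemma cov_zero: "cov Gam i (\<lambda>_ _. 0::'a::real_normed_field) = (\<lambda>_ _. 0)"
  by (simp add: cov_def fun_eq_iff)

lemma cov_dx: "cov Gam k (dx p :: 'n::finite \<Rightarrow> real^'n \<Rightarrow> 'a::real_normed_field) m y = - of_real (Gam p k m y)"
  by (simp add: cov_def dx_def mult_if_delta)

lemma smooth_cov:
  assumes "open U" "\<And>i j k. smooth_on U (Gam i j k)" "\<And>l. smooth_on U (eta l)"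
  shows "smooth_on U (cov Gam i (eta :: 'n::finite \<Rightarrow> real^'n \<Rightarrow> 'a::real_normed_field) m)"
  unfolding cov_def using assms by (intro smooth_diff smooth_pd smooth_sum smooth_mult smooth_of_real) auto

lemma smooth_cov2:
  assumes "open U" "\<And>i j k. smooth_on U (Gam i j k)" "\<And>a b. smooth_on U (X a b)"
  shows "smooth_on U (cov2 Gam i X a b)"
  unfolding cov2_def using assms by (intro smooth_diff smooth_pd smooth_sum smooth_mult smooth_of_real) auto

lemma pd_of_real_mult:
  assumes "open U" "x \<in> U" "smooth_on U g" "smooth_on U f"
  shows "pd k (\<lambda>y. of_real (g y) * f y) x = of_real (pd k g x) * f x + of_real (g x) * pd k (f :: _ \<Rightarrow> 'a::real_normed_field) x"
proof -
  have "pd k (\<lambda>y. of_real (g y) * f y) x = pd k (\<lambda>y. of_real (g y) :: 'a) x * f x + of_real (g x) * pd k f x"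
    using assms by (intro pd_mult smooth_differentiable_at smooth_of_real)
  also have "pd k (\<lambda>y. of_real (g y) :: 'a) x = of_real (pd k g x)"
    using assms by (intro pd_of_real smooth_differentiable_at)
  finally show ?thesis .
qed

lemma pd_cov:
  assumes "open U" "x \<in> U" "\<And>i j k. smooth_on U (Gam i j k)" "\<And>l. smooth_on U (eta l)"
  shows "pd k (cov Gam j (eta :: 'n::finite \<Rightarrow> real^'n \<Rightarrow> 'a::real_normed_field) m) x =
     pd k (pd j (eta m)) x - (\<Sum>l\<in>UNIV. of_real (pd k (Gam l j m) x) * eta l x + of_real (Gam l j m x) * pd k (eta l) x)"
proof -
  have d: "\<And>f. smooth_on U f \<Longrightarrow> f differentiable at x"
    using assms(1,2) smooth_differentiable_at by blast
  have "pd k (cov Gam j eta m) x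
      = pd k (pd j (eta m)) x - pd k (\<lambda>y. \<Sum>l\<in>UNIV. of_real (Gam l j m y) * eta l y) x"
    unfolding cov_def by (rule pd_diff; intro d smooth_pd smooth_sum smooth_mult smooth_of_real assms)
  also have "pd k (\<lambda>y. \<Sum>l\<in>UNIV. of_real (Gam l j m y) * eta l y) x
      = (\<Sum>l\<in>UNIV. pd k (\<lambda>y. of_real (Gam l j m y) * eta l y) x)"
    by (rule pd_sum; intro d smooth_mult smooth_of_real assms)
  finally show ?thesis using assms by (simp add: pd_of_real_mult)
qed

lemma pd_cov2:
  assumes "open U" "x \<in> U" "\<And>i j k. smooth_on U (Gam i j k)" "\<And>a b. smooth_on U (X a b)"
  shows "pd i (cov2 Gam j X a b) x = pd i (pd j (X a b)) x
     - (\<Sum>k\<in>UNIV. of_real (pd i (Gam k j a) x) * X k b x + of_real (Gam k j a x) * pd i (X k b) x)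
     - (\<Sum>k\<in>UNIV. of_real (pd i (Gam k j b) x) * X a k x + of_real (Gam k j b x) * pd i (X a k) x)"
proof -
  have d: "\<And>f. smooth_on U f \<Longrightarrow> f differentiable at x"
    using assms(1,2) smooth_differentiable_at by blast
  have "pd i (cov2 Gam j X a b) x
      = pd i (\<lambda>y. pd j (X a b) y - (\<Sum>k\<in>UNIV. of_real (Gam k j a y) * X k b y)) x
        - pd i (\<lambda>y. \<Sum>k\<in>UNIV. of_real (Gam k j b y) * X a k y) x"
    unfolding cov2_def
    by (rule pd_diff; intro d smooth_diff smooth_pd smooth_sum smooth_mult smooth_of_real assms)
  also have "pd i (\<lambda>y. pd j (X a b) y - (\<Sum>k\<in>UNIV. of_real (Gam k j a y) * X k b y)) x
      = pd i (pd j (X a b)) x - pd i (\<lambda>y. \<Sum>k\<in>UNIV. of_real (Gam k j a y) * X k b y) x"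
    by (rule pd_diff; intro d smooth_pd smooth_sum smooth_mult smooth_of_real assms)
  also have "pd i (\<lambda>y. \<Sum>k\<in>UNIV. of_real (Gam k j a y) * X k b y) x
      = (\<Sum>k\<in>UNIV. pd i (\<lambda>y. of_real (Gam k j a y) * X k b y) x)"
    by (rule pd_sum; intro d smooth_mult smooth_of_real assms)
  also have "pd i (\<lambda>y. \<Sum>k\<in>UNIV. of_real (Gam k j b y) * X a k y) x
      = (\<Sum>k\<in>UNIV. pd i (\<lambda>y. of_real (Gam k j b y) * X a k y) x)"
    by (rule pd_sum; intro d smooth_mult smooth_of_real assms)
  finally show ?thesis using assms by (simp add: pd_of_real_mult)
qed

lemma curv_eq:
  assumes "open U" "x \<in> U" "\<And>i j k. smooth_on U (Gam i j k)"
  shows "curv Gam l m k j x = pd k (Gam l j m) x - pd j (Gam l k m) x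
     - (\<Sum>q\<in>UNIV. Gam q k m x * Gam l j q x) + (\<Sum>q\<in>UNIV. Gam q j m x * Gam l k q x)"
proof -
  have "cov Gam k (cov Gam j (dx l)) m x = - pd k (Gam l j m) x + (\<Sum>q\<in>UNIV. Gam q k m x * Gam l j q x)" for k j
  proof -
    have "cov Gam j (dx l :: _ \<Rightarrow> _ \<Rightarrow> real) m = (\<lambda>y. - Gam l j m y)" for m
      by (simp add: cov_dx fun_eq_iff)
    moreover have "pd k (\<lambda>y. - Gam l j m y) x = - pd k (Gam l j m) x"
      using assms by (intro pd_minus smooth_differentiable_at)
    ultimately show ?thesis by (simp add: cov_apply[of Gam k] sum_negf)
  qed
  then show ?thesis unfolding curv_def by simp
qed

lemma curv_eq_complex:
  assumes "open U" "x \<in> U" "\<And>i j k. smooth_on U (Gam i j k)"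
  shows "complex_of_real (curv Gam l m k j x) = of_real (pd k (Gam l j m) x) - of_real (pd j (Gam l k m) x)
     - (\<Sum>q\<in>UNIV. of_real (Gam q k m x) * of_real (Gam l j q x))
     + (\<Sum>q\<in>UNIV. of_real (Gam q j m x) * of_real (Gam l k q x))"
  unfolding curv_eq[OF assms] by simp

lemma cov_commutator_alg:
  fixes P Dk Dj A B Gk Gj :: "'n::finite \<Rightarrow> 'a::comm_ring_1" and Hj Hk :: "'n \<Rightarrow> 'n \<Rightarrow> 'a"
  shows "(X - (\<Sum>l\<in>UNIV. A l * P l + Gj l * Dk l) - (\<Sum>q\<in>UNIV. Gk q * (Dj q - (\<Sum>l\<in>UNIV. Hj q l * P l))))
       - (X - (\<Sum>l\<in>UNIV. B l * P l + Gk l * Dj l) - (\<Sum>q\<in>UNIV. Gj q * (Dk q - (\<Sum>l\<in>UNIV. Hk q l * P l))))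
     = - (\<Sum>l\<in>UNIV. P l * (A l - B l - (\<Sum>q\<in>UNIV. Gk q * Hj q l) + (\<Sum>q\<in>UNIV. Gj q * Hk q l)))"
proof -
  have e1: "(\<Sum>l\<in>UNIV. P l * (A l - B l - (\<Sum>q\<in>UNIV. Gk q * Hj q l) + (\<Sum>q\<in>UNIV. Gj q * Hk q l)))
    = (\<Sum>l\<in>UNIV. P l * A l) - (\<Sum>l\<in>UNIV. P l * B l) - (\<Sum>l\<in>UNIV. P l * (\<Sum>q\<in>UNIV. Gk q * Hj q l)) + (\<Sum>l\<in>UNIV. P l * (\<Sum>q\<in>UNIV. Gj q * Hk q l))"
    by (simp add: algebra_simps sum.distrib sum_subtractf)
  show ?thesis unfolding e1 sum_mult_sum_commute
    by (simp add: algebra_simps sum.distrib sum_subtractf sum_distrib_left)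
qed


lemma cov_commutator:
  assumes "open U" "x \<in> U" "\<And>i j k. smooth_on U (Gam i j k)" "\<And>l. smooth_on U (eta l)"
  shows "cov Gam k (cov Gam j (eta :: 'n::finite \<Rightarrow> real^'n \<Rightarrow> complex)) m x - cov Gam j (cov Gam k eta) m x
     = - (\<Sum>l\<in>UNIV. eta l x * of_real (curv Gam l m k j x))"
proof -
  have ex: "cov Gam k (cov Gam j eta) m x = (pd k (pd j (eta m)) x - (\<Sum>l\<in>UNIV. of_real (pd k (Gam l j m) x) * eta l x + of_real (Gam l j m x) * pd k (eta l) x))
      - (\<Sum>q\<in>UNIV. of_real (Gam q k m x) * (pd j (eta q) x - (\<Sum>l\<in>UNIV. of_real (Gam l j q x) * eta l x)))" for k j
    by (simp only: cov_apply[of Gam k "cov Gam j eta"] pd_cov[OF assms] cov_apply[of Gam j eta])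
  have sw: "pd k (pd j (eta m)) x = pd j (pd k (eta m)) x" by (rule smooth_pd_commute[OF assms(1,2,4)])
  show ?thesis unfolding ex sw curv_eq_complex[OF assms(1-3)]
    by (rule cov_commutator_alg)
qed


lemma cov2_commutator_alg:
  fixes P Di Dj Hi Hj :: "'n::finite \<Rightarrow> 'n \<Rightarrow> 'a::comm_ring_1"
    and Aia Aja Aib Ajb Gia Gja Gib Gjb :: "'n \<Rightarrow> 'a"
  shows "((XX - (\<Sum>k\<in>UNIV. Aia k * P k b + Gja k * Di k b) - (\<Sum>k\<in>UNIV. Aib k * P a k + Gjb k * Di a k))
     - (\<Sum>k\<in>UNIV. Gia k * (Dj k b - (\<Sum>l\<in>UNIV. Hj k l * P l b) - (\<Sum>l\<in>UNIV. Gjb l * P k l)))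
     - (\<Sum>k\<in>UNIV. Gib k * (Dj a k - (\<Sum>l\<in>UNIV. Gja l * P l k) - (\<Sum>l\<in>UNIV. Hj k l * P a l))))
   - ((XX - (\<Sum>k\<in>UNIV. Aja k * P k b + Gia k * Dj k b) - (\<Sum>k\<in>UNIV. Ajb k * P a k + Gib k * Dj a k))
     - (\<Sum>k\<in>UNIV. Gja k * (Di k b - (\<Sum>l\<in>UNIV. Hi k l * P l b) - (\<Sum>l\<in>UNIV. Gib l * P k l)))
     - (\<Sum>k\<in>UNIV. Gjb k * (Di a k - (\<Sum>l\<in>UNIV. Gia l * P l k) - (\<Sum>l\<in>UNIV. Hi k l * P a l))))
   = - (\<Sum>l\<in>UNIV. P l b * (Aia l - Aja l - (\<Sum>q\<in>UNIV. Gia q * Hj q l) + (\<Sum>q\<in>UNIV. Gja q * Hi q l)))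
     - (\<Sum>l\<in>UNIV. P a l * (Aib l - Ajb l - (\<Sum>q\<in>UNIV. Gib q * Hj q l) + (\<Sum>q\<in>UNIV. Gjb q * Hi q l)))"
proof -
  have m1: "(\<Sum>k\<in>UNIV. Gia k * (\<Sum>l\<in>UNIV. Gjb l * P k l)) = (\<Sum>k\<in>UNIV. Gjb k * (\<Sum>l\<in>UNIV. Gia l * P l k))"
    by (rule sum_mult_sum_transpose)
  have m2: "(\<Sum>k\<in>UNIV. Gja k * (\<Sum>l\<in>UNIV. Gib l * P k l)) = (\<Sum>k\<in>UNIV. Gib k * (\<Sum>l\<in>UNIV. Gja l * P l k))"
    by (rule sum_mult_sum_transpose)
  have e1: "(\<Sum>l\<in>UNIV. P l b * (Aia l - Aja l - (\<Sum>q\<in>UNIV. Gia q * Hj q l) + (\<Sum>q\<in>UNIV. Gja q * Hi q l)))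
    = (\<Sum>l\<in>UNIV. P l b * Aia l) - (\<Sum>l\<in>UNIV. P l b * Aja l)
      - (\<Sum>l\<in>UNIV. P l b * (\<Sum>q\<in>UNIV. Gia q * Hj q l)) + (\<Sum>l\<in>UNIV. P l b * (\<Sum>q\<in>UNIV. Gja q * Hi q l))"
    by (simp add: algebra_simps sum.distrib sum_subtractf)
  have e2: "(\<Sum>l\<in>UNIV. P a l * (Aib l - Ajb l - (\<Sum>q\<in>UNIV. Gib q * Hj q l) + (\<Sum>q\<in>UNIV. Gjb q * Hi q l)))
    = (\<Sum>l\<in>UNIV. P a l * Aib l) - (\<Sum>l\<in>UNIV. P a l * Ajb l)
      - (\<Sum>l\<in>UNIV. P a l * (\<Sum>q\<in>UNIV. Gib q * Hj q l)) + (\<Sum>l\<in>UNIV. P a l * (\<Sum>q\<in>UNIV. Gjb q * Hi q l))"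
    by (simp add: algebra_simps sum.distrib sum_subtractf)
  have s1: "(\<Sum>l\<in>UNIV. P l b * (\<Sum>q\<in>UNIV. Gia q * Hj q l)) = (\<Sum>q\<in>UNIV. Gia q * (\<Sum>l\<in>UNIV. Hj q l * P l b))"
    by (rule sum_mult_sum_commute)
  have s2: "(\<Sum>l\<in>UNIV. P l b * (\<Sum>q\<in>UNIV. Gja q * Hi q l)) = (\<Sum>q\<in>UNIV. Gja q * (\<Sum>l\<in>UNIV. Hi q l * P l b))"
    by (rule sum_mult_sum_commute)
  have s3: "(\<Sum>l\<in>UNIV. P a l * (\<Sum>q\<in>UNIV. Gib q * Hj q l)) = (\<Sum>q\<in>UNIV. Gib q * (\<Sum>l\<in>UNIV. Hj q l * P a l))"
    by (rule sum_mult_sum_commute)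
  have s4: "(\<Sum>l\<in>UNIV. P a l * (\<Sum>q\<in>UNIV. Gjb q * Hi q l)) = (\<Sum>q\<in>UNIV. Gjb q * (\<Sum>l\<in>UNIV. Hi q l * P a l))"
    by (rule sum_mult_sum_commute)
  have L: "\<And>F G H. (\<Sum>k\<in>UNIV. (F::'n \<Rightarrow> 'a) k * (G k - H k)) = (\<Sum>k\<in>UNIV. F k * G k) - (\<Sum>k\<in>UNIV. F k * H k)"
    by (simp add: algebra_simps sum_subtractf)
  show ?thesis unfolding e1 e2 s1 s2 s3 s4
    apply (simp only: L sum.distrib)
    apply (simp only: m1 m2)
    by (simp add: algebra_simps)
qed


lemma cov2_commutator:
  assumes "open U" "x \<in> U" "\<And>i j k. smooth_on U (Gam i j k)" "\<And>a b. smooth_on U (X a b)"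
  shows "cov2 Gam i (cov2 Gam j X) a b x - cov2 Gam j (cov2 Gam i X) a b x
     = - (\<Sum>l\<in>UNIV. X l b x * of_real (curv Gam l a i j x)) - (\<Sum>l\<in>UNIV. X a l x * of_real (curv Gam l b i j x))"
proof -
  have ex: "cov2 Gam i (cov2 Gam j X) a b x = (pd i (pd j (X a b)) x
     - (\<Sum>k\<in>UNIV. of_real (pd i (Gam k j a) x) * X k b x + of_real (Gam k j a x) * pd i (X k b) x)
     - (\<Sum>k\<in>UNIV. of_real (pd i (Gam k j b) x) * X a k x + of_real (Gam k j b x) * pd i (X a k) x))
     - (\<Sum>k\<in>UNIV. of_real (Gam k i a x) * (pd j (X k b) x - (\<Sum>l\<in>UNIV. of_real (Gam l j k x) * X l b x) - (\<Sum>l\<in>UNIV. of_real (Gam l j b x) * X k l x)))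
     - (\<Sum>k\<in>UNIV. of_real (Gam k i b x) * (pd j (X a k) x - (\<Sum>l\<in>UNIV. of_real (Gam l j a x) * X l k x) - (\<Sum>l\<in>UNIV. of_real (Gam l j k x) * X a l x)))"
    for i j
    by (simp only: cov2_apply[of Gam i "cov2 Gam j X"] pd_cov2[OF assms] cov2_apply[of Gam j X])
  have sw: "pd i (pd j (X a b)) x = pd j (pd i (X a b)) x" by (rule smooth_pd_commute[OF assms(1,2,4)])
  show ?thesis unfolding ex sw curv_eq_complex[OF assms(1-3)]
    by (rule cov2_commutator_alg)
qed
section \<open>Consequences of Poisson compatibility\<close>

definition torsion_curvature :: "('n::finite \<Rightarrow> 'n \<Rightarrow> 'n \<Rightarrow> real^'n \<Rightarrow> real)
     \<Rightarrow> 'n \<Rightarrow> 'n \<Rightarrow> 'n \<Rightarrow> 'n \<Rightarrow> real^'n \<Rightarrow> real" where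
  "torsion_curvature Gam j n m s x = tors_cd Gam j n m s x - curv Gam j n m s x + curv Gam j m n s x"

lemma tors_eq_fun: "tors Gam j b a = (\<lambda>y. Gam j b a y - Gam j a b y)"
  by (rule ext) (simp add: tors_def)

lemma torsion_curvature_eq:
  assumes "open U" "x \<in> U" "\<And>i j k. smooth_on U (Gam i j k)"
  shows "torsion_curvature Gam j b a s x
    = pd b (Gam j s a) x - pd a (Gam j s b) x + (\<Sum>l\<in>UNIV. Gam l s a x * Gam j l b x - Gam l s b x * Gam j l a x)"
proof -
  have d: "\<And>f. smooth_on U f \<Longrightarrow> f differentiable at x" using assms(1,2) smooth_differentiable_at by blast
  have pt: "pd s (tors Gam j b a) x = pd s (Gam j b a) x - pd s (Gam j a b) x"
    unfolding tors_eq_fun by (rule pd_diff; intro d assms)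
  have e: "tors_cd Gam j b a s x - curv Gam j b a s x + curv Gam j a b s x =
     (pd s (Gam j b a) x - pd s (Gam j a b) x
      + (\<Sum>l\<in>UNIV. Gam j s l x * (Gam l b a x - Gam l a b x))
      - (\<Sum>l\<in>UNIV. Gam l s b x * (Gam j l a x - Gam j a l x))
      - (\<Sum>l\<in>UNIV. Gam l s a x * (Gam j b l x - Gam j l b x)))
     - (pd a (Gam j s b) x - pd s (Gam j a b) x - (\<Sum>q\<in>UNIV. Gam q a b x * Gam j s q x) + (\<Sum>q\<in>UNIV. Gam q s b x * Gam j a q x))
     + (pd b (Gam j s a) x - pd s (Gam j b a) x - (\<Sum>q\<in>UNIV. Gam q b a x * Gam j s q x) + (\<Sum>q\<in>UNIV. Gam q s a x * Gam j b q x))"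
    unfolding tors_cd_def pt curv_eq[OF assms] by (simp add: tors_def)
  show ?thesis unfolding torsion_curvature_def e
    by (simp add: algebra_simps sum.distrib sum_subtractf sum_distrib_left)
qed

lemma pd_poisson:
  fixes om :: "'n::finite \<Rightarrow> 'n \<Rightarrow> real^'n \<Rightarrow> real"
  assumes "poisson_compatible U om Gam" "y \<in> U"
  shows "pd l (om i j) y = - (\<Sum>k\<in>UNIV. om k j y * Gam i k l y + om i k y * Gam j k l y)"
proof -
  have "pd l (om i j) y - (\<Sum>k\<in>UNIV. om k j y * cov Gam k (dx i) l y) - (\<Sum>k\<in>UNIV. om i k y * cov Gam k (dx j) l y) = 0"
    using assms unfolding poisson_compatible_def by blast
  then show ?thesis by (simp add: cov_dx sum.distrib sum_negf algebra_simps)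
qed

lemma poisson_antisym:
  assumes "poisson_compatible U om Gam" "y \<in> U"
  shows "om i j y = - om j i y"
  using assms unfolding poisson_compatible_def by blast

text \<open>Both sides are second partial derivatives of \<open>om i j\<close>, computed from \<open>pd_poisson\<close>.\<close>

lemma poisson_pd_integrability:
  fixes om :: "'n::finite \<Rightarrow> 'n \<Rightarrow> real^'n \<Rightarrow> real"
  assumes "open U" "x \<in> U" "\<And>i j k. smooth_on U (Gam i j k)" "\<And>i j. smooth_on U (om i j)"
    "poisson_compatible U om Gam"
  shows "(\<Sum>k\<in>UNIV. pd a (om k j) x * Gam i k b x + om k j x * pd a (Gam i k b) x + pd a (om i k) x * Gam j k b x + om i k x * pd a (Gam j k b) x)
       = (\<Sum>k\<in>UNIV. pd b (om k j) x * Gam i k a x + om k j x * pd b (Gam i k a) x + pd b (om i k) x * Gam j k a x + om i k x * pd b (Gam j k a) x)"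
proof -
  have d: "\<And>f. smooth_on U f \<Longrightarrow> f differentiable at x" using assms(1,2) smooth_differentiable_at by blast
  have ex: "pd a (pd b (om i j)) x = - (\<Sum>k\<in>UNIV. pd a (om k j) x * Gam i k b x + om k j x * pd a (Gam i k b) x + pd a (om i k) x * Gam j k b x + om i k x * pd a (Gam j k b) x)" for a b
  proof -
    have "pd a (pd b (om i j)) x = pd a (\<lambda>y. - (\<Sum>k\<in>UNIV. om k j y * Gam i k b y + om i k y * Gam j k b y)) x"
      by (rule pd_cong_open[OF assms(1,2)]) (rule pd_poisson[OF assms(5)])
    also have "\<dots> = - pd a (\<lambda>y. \<Sum>k\<in>UNIV. om k j y * Gam i k b y + om i k y * Gam j k b y) x"
      by (rule pd_minus; intro d smooth_sum smooth_add smooth_mult assms)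
    also have "pd a (\<lambda>y. \<Sum>k\<in>UNIV. om k j y * Gam i k b y + om i k y * Gam j k b y) x
       = (\<Sum>k\<in>UNIV. pd a (\<lambda>y. om k j y * Gam i k b y + om i k y * Gam j k b y) x)"
      by (rule pd_sum; intro d smooth_add smooth_mult assms)
    also have "\<dots> = (\<Sum>k\<in>UNIV. pd a (om k j) x * Gam i k b x + om k j x * pd a (Gam i k b) x + pd a (om i k) x * Gam j k b x + om i k x * pd a (Gam j k b) x)"
    proof (rule sum.cong[OF refl])
      fix k
      have "pd a (\<lambda>y. om k j y * Gam i k b y + om i k y * Gam j k b y) x = pd a (\<lambda>y. om k j y * Gam i k b y) x + pd a (\<lambda>y. om i k y * Gam j k b y) x"
        by (rule pd_add; intro d smooth_mult assms)
      also have "pd a (\<lambda>y. om k j y * Gam i k b y) x = pd a (om k j) x * Gam i k b x + om k j x * pd a (Gam i k b) x"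
        by (rule pd_mult; intro d assms)
      also have "pd a (\<lambda>y. om i k y * Gam j k b y) x = pd a (om i k) x * Gam j k b x + om i k x * pd a (Gam j k b) x"
        by (rule pd_mult; intro d assms)
      finally show "pd a (\<lambda>y. om k j y * Gam i k b y + om i k y * Gam j k b y) x
          = pd a (om k j) x * Gam i k b x + om k j x * pd a (Gam i k b) x
            + pd a (om i k) x * Gam j k b x + om i k x * pd a (Gam j k b) x"
        by (simp add: algebra_simps)
    qed
    finally show ?thesis .
  qed
  have "pd a (pd b (om i j)) x = pd b (pd a (om i j)) x" by (rule smooth_pd_commute[OF assms(1,2) assms(4)])
  then show ?thesis unfolding ex by simp
qed

lemma poisson_contraction_symmetric_alg:
  fixes W :: "'n::finite \<Rightarrow> 'n \<Rightarrow> real" and G :: "'n \<Rightarrow> 'n \<Rightarrow> 'n \<Rightarrow> real"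
    and dG :: "'n \<Rightarrow> 'n \<Rightarrow> 'n \<Rightarrow> 'n \<Rightarrow> real" and dW :: "'n \<Rightarrow> 'n \<Rightarrow> 'n \<Rightarrow> real"
  assumes A: "\<And>i j. W i j = - W j i"
    and C: "\<And>l i j. dW l i j = - (\<Sum>k\<in>UNIV. W k j * G i k l + W i k * G j k l)"
    and I: "(\<Sum>k\<in>UNIV. dW a k j * G i k b + W k j * dG a i k b + dW a i k * G j k b + W i k * dG a j k b)
          = (\<Sum>k\<in>UNIV. dW b k j * G i k a + W k j * dG b i k a + dW b i k * G j k a + W i k * dG b j k a)"
  shows "(\<Sum>s\<in>UNIV. W i s * (dG b j s a - dG a j s b + (\<Sum>l\<in>UNIV. G l s a * G j l b - G l s b * G j l a)))
       = (\<Sum>s\<in>UNIV. W j s * (dG b i s a - dG a i s b + (\<Sum>l\<in>UNIV. G l s a * G i l b - G l s b * G i l a)))"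
proof -
  define X where "X = (\<Sum>s\<in>UNIV. W i s * (dG b j s a - dG a j s b)) - (\<Sum>s\<in>UNIV. W j s * (dG b i s a - dG a i s b))"
  define gg1 where "gg1 = (\<Sum>s\<in>UNIV. \<Sum>l\<in>UNIV. W i s * (G l s a * G j l b - G l s b * G j l a))"
  define gg2 where "gg2 = (\<Sum>s\<in>UNIV. \<Sum>l\<in>UNIV. W j s * (G l s a * G i l b - G l s b * G i l a))"
  define dWp where "dWp = (\<Sum>k\<in>UNIV. dW a k j * G i k b - dW b k j * G i k a + dW a i k * G j k b - dW b i k * G j k a)"
  have goal: "LHS - RHS = X + gg1 - gg2" if "LHS = (\<Sum>s\<in>UNIV. W i s * (dG b j s a - dG a j s b + (\<Sum>l\<in>UNIV. G l s a * G j l b - G l s b * G j l a)))"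
     "RHS = (\<Sum>s\<in>UNIV. W j s * (dG b i s a - dG a i s b + (\<Sum>l\<in>UNIV. G l s a * G i l b - G l s b * G i l a)))" for LHS RHS
    unfolding that X_def gg1_def gg2_def by (simp add: algebra_simps sum.distrib sum_subtractf sum_distrib_left)
  have WX: "X = dWp"
  proof -
    have Wjs: "W j s = - W s j" for s by (rule A)
    have "X = - ((\<Sum>k\<in>UNIV. W k j * (dG a i k b - dG b i k a)) + (\<Sum>k\<in>UNIV. W i k * (dG a j k b - dG b j k a)))"
      unfolding X_def Wjs by (simp add: algebra_simps sum.distrib sum_subtractf sum_negf)
    also have "(\<Sum>k\<in>UNIV. W k j * (dG a i k b - dG b i k a)) + (\<Sum>k\<in>UNIV. W i k * (dG a j k b - dG b j k a)) = - dWp"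
      using I unfolding dWp_def by (simp add: algebra_simps sum.distrib sum_subtractf)
    finally show ?thesis by simp
  qed
  define F where "F = (\<lambda>k m. - (W m j * G k m a * G i k b) - W k m * G j m a * G i k b + W m j * G k m b * G i k a + W k m * G j m b * G i k a
       - W m k * G i m a * G j k b - W i m * G k m a * G j k b + W m k * G i m b * G j k a + W i m * G k m b * G j k a)"
  have dWF: "dWp = (\<Sum>k\<in>UNIV. \<Sum>m\<in>UNIV. F k m)"
    unfolding dWp_def C F_def by (simp add: algebra_simps sum.distrib sum_subtractf sum_distrib_left sum_distrib_right sum_negf)
  define fa where "fa = (\<lambda>k m. - (W k m * G j m a * G i k b))"
  define ga where "ga = (\<lambda>k m. W m k * G i m b * G j k a)"
  define fb where "fb = (\<lambda>k m. W k m * G j m b * G i k a)"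
  define gb where "gb = (\<lambda>k m. - (W m k * G i m a * G j k b))"
  define fc where "fc = (\<lambda>k m. - (W m j * G k m a * G i k b) + W m j * G k m b * G i k a)"
  define fd where "fd = (\<lambda>k m. - (W i m * G k m a * G j k b) + W i m * G k m b * G j k a)"
  have Fs: "F k m = (fa k m + ga k m) + (fb k m + gb k m) + fc k m + fd k m" for k m
    unfolding F_def fa_def ga_def fb_def gb_def fc_def fd_def by (simp add: algebra_simps)
  have za: "(\<Sum>k\<in>UNIV. \<Sum>m\<in>UNIV. fa k m + ga k m) = 0"
    by (rule sum_cancel_transposed) (simp add: fa_def ga_def algebra_simps)
  have zb: "(\<Sum>k\<in>UNIV. \<Sum>m\<in>UNIV. fb k m + gb k m) = 0"
    by (rule sum_cancel_transposed) (simp add: fb_def gb_def algebra_simps)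
  have zc: "(\<Sum>k\<in>UNIV. \<Sum>m\<in>UNIV. fc k m) = gg2"
  proof -
    have "(\<Sum>k\<in>UNIV. \<Sum>m\<in>UNIV. fc k m) = (\<Sum>m\<in>UNIV. \<Sum>k\<in>UNIV. fc k m)" by (rule sum.swap)
    also have "\<dots> = gg2" unfolding gg2_def fc_def
      by (rule sum.cong[OF refl], rule sum.cong[OF refl]) (simp add: A[of _ j] algebra_simps)
    finally show ?thesis .
  qed
  have zd: "(\<Sum>k\<in>UNIV. \<Sum>m\<in>UNIV. fd k m) = - gg1"
  proof -
    have "(\<Sum>k\<in>UNIV. \<Sum>m\<in>UNIV. fd k m) = (\<Sum>m\<in>UNIV. \<Sum>k\<in>UNIV. fd k m)" by (rule sum.swap)
    also have "\<dots> = - gg1" unfolding gg1_def fd_def sum_negf[symmetric]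
      by (rule sum.cong[OF refl], rule sum.cong[OF refl]) (simp add: algebra_simps)
    finally show ?thesis .
  qed
  have "(\<Sum>k\<in>UNIV. \<Sum>m\<in>UNIV. F k m) = (\<Sum>k\<in>UNIV. \<Sum>m\<in>UNIV. fa k m + ga k m) + (\<Sum>k\<in>UNIV. \<Sum>m\<in>UNIV. fb k m + gb k m)
      + (\<Sum>k\<in>UNIV. \<Sum>m\<in>UNIV. fc k m) + (\<Sum>k\<in>UNIV. \<Sum>m\<in>UNIV. fd k m)"
    unfolding Fs by (simp add: sum.distrib)
  then have "X = gg2 - gg1" using WX dWF za zb zc zd by simp
  then show ?thesis using goal[OF refl refl] by simp
qed


lemma poisson_torsion_curvature_symmetric:
  assumes "open U" "x \<in> U" "\<And>i j k. smooth_on U (Gam i j k)" "\<And>i j. smooth_on U (om i j)"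
    and "poisson_compatible U om Gam"
  shows "(\<Sum>s\<in>UNIV. om i s x * torsion_curvature Gam j b a s x)
       = (\<Sum>s\<in>UNIV. om j s x * torsion_curvature Gam i b a s x)"
  unfolding torsion_curvature_eq[OF assms(1-3)]
  by (rule poisson_contraction_symmetric_alg[where W = "\<lambda>i j. om i j x" and G = "\<lambda>i j k. Gam i j k x"
        and dG = "\<lambda>m i j k. pd m (Gam i j k) x" and dW = "\<lambda>l i j. pd l (om i j) x",
        OF poisson_antisym[OF assms(5,2)] pd_poisson[OF assms(5,2)] poisson_pd_integrability[OF assms]])

section \<open>The bundle map \<open>S\<close>\<close>

lemma torsion_free_plus_S_antisym:
  fixes Gam S :: "'n::finite \<Rightarrow> 'n \<Rightarrow> 'n \<Rightarrow> real^'n \<Rightarrow> real"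
  assumes "torsion_free_plus U Gam S" "x \<in> U"
  shows "S p a b x - S p b a x = tors Gam p a b x"
proof -
  have "\<forall>m. smooth_on U ((dx p :: 'n \<Rightarrow> real^'n \<Rightarrow> complex) m)"
    by (simp add: dx_def smooth_const)
  then have "wedgeT (\<lambda>k m y. cov Gam k (dx p) m y + Sop S (dx p) k m y) a b x
      = d1 (dx p :: 'n \<Rightarrow> real^'n \<Rightarrow> complex) a b x"
    using assms unfolding torsion_free_plus_def by blast
  then have "complex_of_real (S p a b x - S p b a x) = of_real (tors Gam p a b x)"
    by (simp add: wedgeT_def cov_dx d1_dx Sop_def) (simp add: dx_def mult_if_delta tors_def algebra_simps)
  then show ?thesis by (simp only: of_real_eq_iff)
qed

text \<open>\<open>S_cd Gam S p a b j\<close> is the covariant derivative \<open>S\<^sup>p\<^sub>a\<^sub>b\<^sub>;\<^sub>j\<close> of \<open>S\<close> viewed as a tensor.\<close>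

definition S_cd :: "('n::finite \<Rightarrow> 'n \<Rightarrow> 'n \<Rightarrow> real^'n \<Rightarrow> real) \<Rightarrow> ('n \<Rightarrow> 'n \<Rightarrow> 'n \<Rightarrow> real^'n \<Rightarrow> real)
     \<Rightarrow> 'n \<Rightarrow> 'n \<Rightarrow> 'n \<Rightarrow> 'n \<Rightarrow> real^'n \<Rightarrow> real" where
  "S_cd Gam S p a b j x = pd j (S p a b) x + (\<Sum>q\<in>UNIV. Gam p j q x * S q a b x)
     - (\<Sum>k\<in>UNIV. Gam k j a x * S p k b x) - (\<Sum>k\<in>UNIV. Gam k j b x * S p a k x)"

lemma smooth_Sop:
  assumes "open U" "\<And>p n m. smooth_on U (S p n m)" "\<And>l. smooth_on U (eta l)"
  shows "smooth_on U (Sop S (eta :: 'n::finite \<Rightarrow> real^'n \<Rightarrow> complex) a b)"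
  unfolding Sop_def using assms by (intro smooth_sum smooth_mult smooth_of_real) auto

lemma pd_Sop:
  assumes "open U" "x \<in> U" "\<And>p n m. smooth_on U (S p n m)" "\<And>l. smooth_on U (eta l)"
  shows "pd j (Sop S eta a b) x
    = (\<Sum>p\<in>UNIV. pd j (eta p) x * of_real (S p a b x) + eta p x * of_real (pd j (S p a b) x))"
proof -
  have d: "\<And>f. smooth_on U f \<Longrightarrow> f differentiable at x"
    using assms(1,2) smooth_differentiable_at by blast
  have "pd j (Sop S eta a b) x = (\<Sum>p\<in>UNIV. pd j (\<lambda>x. eta p x * of_real (S p a b x)) x)"
    unfolding Sop_def by (rule pd_sum; intro d smooth_mult smooth_of_real assms)
  also have "\<dots> = (\<Sum>p\<in>UNIV. pd j (eta p) x * of_real (S p a b x) + eta p x * pd j (\<lambda>x. of_real (S p a b x)) x)"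
    by (rule sum.cong[OF refl], rule pd_mult; intro d smooth_of_real assms)
  finally show ?thesis by (simp add: pd_of_real d assms)
qed

lemma nabS_eq:
  assumes "open U" "x \<in> U" "\<And>p n m. smooth_on U (S p n m)" "\<And>l. smooth_on U (eta l)"
  shows "nabS Gam S j eta a b x = (\<Sum>p\<in>UNIV. eta p x * of_real (S_cd Gam S p a b j x))"
proof -
  have e: "nabS Gam S j eta a b x =
     (\<Sum>p\<in>UNIV. pd j (eta p) x * of_real (S p a b x) + eta p x * of_real (pd j (S p a b) x))
     - (\<Sum>k\<in>UNIV. of_real (Gam k j a x) * (\<Sum>p\<in>UNIV. eta p x * of_real (S p k b x)))
     - (\<Sum>k\<in>UNIV. of_real (Gam k j b x) * (\<Sum>p\<in>UNIV. eta p x * of_real (S p a k x)))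
     - (\<Sum>p\<in>UNIV. (pd j (eta p) x - (\<Sum>q\<in>UNIV. of_real (Gam q j p x) * eta q x)) * of_real (S p a b x))"
    unfolding nabS_def cov2_apply pd_Sop[OF assms] by (simp add: Sop_def cov_apply)
  have s1: "(\<Sum>p\<in>UNIV. (\<Sum>q\<in>UNIV. of_real (Gam q j p x) * eta q x) * of_real (S p a b x))
     = (\<Sum>p\<in>UNIV. eta p x * (\<Sum>q\<in>UNIV. of_real (Gam p j q x) * of_real (S q a b x)))"
    unfolding sum_distrib_left sum_distrib_right by (subst sum.swap) (simp add: mult_ac)
  have s2: "(\<Sum>k\<in>UNIV. g k * (\<Sum>p\<in>UNIV. eta p x * F k p))
     = (\<Sum>p\<in>UNIV. eta p x * (\<Sum>k\<in>UNIV. g k * F k p))" for g :: "'a \<Rightarrow> complex" and F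
    unfolding sum_distrib_left by (subst sum.swap) (simp add: mult_ac)
  have "nabS Gam S j eta a b x =
     (\<Sum>p\<in>UNIV. eta p x * of_real (pd j (S p a b) x))
     - (\<Sum>p\<in>UNIV. eta p x * (\<Sum>k\<in>UNIV. of_real (Gam k j a x) * of_real (S p k b x)))
     - (\<Sum>p\<in>UNIV. eta p x * (\<Sum>k\<in>UNIV. of_real (Gam k j b x) * of_real (S p a k x)))
     + (\<Sum>p\<in>UNIV. eta p x * (\<Sum>q\<in>UNIV. of_real (Gam p j q x) * of_real (S q a b x)))"
    unfolding e s2 s1[symmetric] by (simp add: algebra_simps sum.distrib sum_subtractf)
  then show ?thesis unfolding S_cd_def
    by (simp add: algebra_simps sum.distrib sum_subtractf sum_distrib_left)
qed

locale poisson_chart =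
  fixes U :: "(real^'n::finite) set" and om :: "'n \<Rightarrow> 'n \<Rightarrow> real^'n \<Rightarrow> real"
    and Gam S :: "'n \<Rightarrow> 'n \<Rightarrow> 'n \<Rightarrow> real^'n \<Rightarrow> real"
  assumes open_U: "open U"
    and smooth_Gam: "\<And>i j k. smooth_on U (Gam i j k)"
    and smooth_S: "\<And>p n m. smooth_on U (S p n m)"
    and smooth_om: "\<And>i j. smooth_on U (om i j)"
    and compatible: "poisson_compatible U om Gam"
    and torsion_free: "torsion_free_plus U Gam S"
begin

lemma smooth_imp_differentiable: "smooth_on U f \<Longrightarrow> x \<in> U \<Longrightarrow> f differentiable at x"
  using smooth_differentiable_at open_U by blast

lemma tors_cd_antisym: "x \<in> U \<Longrightarrow> tors_cd Gam j n m s x = - tors_cd Gam j m n s x"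
proof -
  assume x: "x \<in> U"
  have "pd s (tors Gam j n m) x = pd s (\<lambda>y. - tors Gam j m n y) x"
    by (simp add: tors_eq_fun)
  also have "\<dots> = - pd s (tors Gam j m n) x"
    unfolding tors_eq_fun by (intro pd_minus smooth_imp_differentiable smooth_diff open_U smooth_Gam x)
  finally show ?thesis
    unfolding tors_cd_def by (simp add: tors_def algebra_simps sum_negf sum_subtractf sum.distrib)
qed

lemma S_cd_antisym:
  assumes x: "x \<in> U"
  shows "S_cd Gam S p a b j x - S_cd Gam S p b a j x = tors_cd Gam p a b j x"
proof -
  have tS: "\<And>q u v y. y \<in> U \<Longrightarrow> tors Gam q u v y = S q u v y - S q v u y"
    using torsion_free_plus_S_antisym[OF torsion_free] by simp
  have "pd j (S p a b) x - pd j (S p b a) x = pd j (\<lambda>y. S p a b y - S p b a y) x"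
    by (rule pd_diff[symmetric]; intro smooth_imp_differentiable smooth_S x)
  also have "\<dots> = pd j (tors Gam p a b) x"
    by (rule pd_cong_open[OF open_U x]) (simp add: tS)
  finally have "pd j (S p a b) x - pd j (S p b a) x = pd j (tors Gam p a b) x" .
  then show ?thesis unfolding S_cd_def tors_cd_def tS[OF x]
    by (simp add: algebra_simps sum.distrib sum_subtractf)
qed

lemma cov2_diff:
  assumes x: "x \<in> U" and "\<And>a b. smooth_on U (F a b)" "\<And>a b. smooth_on U (G a b)"
  shows "cov2 Gam i (\<lambda>a b y. F a b y - G a b y) a b x = cov2 Gam i F a b x - cov2 Gam i G a b x"
proof -
  have "pd i (\<lambda>y. F a b y - G a b y) x = pd i (F a b) x - pd i (G a b) x"
    using assms by (intro pd_diff smooth_imp_differentiable)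
  then show ?thesis unfolding cov2_apply by (simp add: algebra_simps sum.distrib sum_subtractf)
qed

lemma cov2_nabS_eq:
  assumes x: "x \<in> U" and smooth_xi: "\<And>l. smooth_on U (xi l)"
  shows "cov2 Gam i (nabS Gam S j xi) a b x = cov2 Gam i (cov2 Gam j (Sop S xi)) a b x
      - nabS Gam S i (cov Gam j xi) a b x - Sop S (cov Gam i (cov Gam j xi)) a b x"
proof -
  have "cov2 Gam i (nabS Gam S j xi) a b x
      = cov2 Gam i (cov2 Gam j (Sop S xi)) a b x - cov2 Gam i (Sop S (cov Gam j xi)) a b x"
    unfolding nabS_def[of Gam S j] using open_U smooth_Gam smooth_S smooth_xi
    by (intro cov2_diff x smooth_cov2 smooth_Sop smooth_cov)
  then show ?thesis unfolding nabS_def by simp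
qed

end

section \<open>Unfolding the quantum torsion\<close>

lemma sum_fun_apply: "(\<Sum>k\<in>A. f k) a = (\<Sum>k\<in>A. f k a)"
  by (induction A rule: infinite_finite_induct) auto

lemma sum_mset_image_sum:
  "sum_mset (image_mset f (\<Sum>k\<in>K. M k)) = (\<Sum>k\<in>K. sum_mset (image_mset f (M k)))"
  by (induction K rule: infinite_finite_induct) auto

lemma sum_mset_mset_set: "sum_mset (image_mset f (mset_set A)) = sum f A"
  by (simp add: sum_unfold_sum_mset)

lemma sum_UNIV_prod: "(\<Sum>p\<in>(UNIV::('a::finite \<times> 'b::finite) set). f p) = (\<Sum>i\<in>UNIV. \<Sum>j\<in>UNIV. f (i, j))"
  by (simp add: sum.cartesian_product)

lemma fst_wedge1_sum:
  "fst (wedge1_sum Gam om T) a b x = sum_mset (image_mset (\<lambda>(u, v). fst (wedge1 Gam om u v) a b x) T)"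
  by (induction T) (auto simp: wedge1_sum_def)

lemma snd_wedge1_sum:
  "snd (wedge1_sum Gam om T) a b x = sum_mset (image_mset (\<lambda>(u, v). snd (wedge1 Gam om u v) a b x) T)"
  by (induction T) (auto simp: wedge1_sum_def)

lemma fst_wedge1: "fst (wedge1 Gam om (u0, u1) (v0, v1)) a b x = wedge u0 v0 a b x"
  by (simp add: wedge1_def lwedge_def)

lemma snd_wedge1: "snd (wedge1 Gam om (u0, u1) (v0, v1)) a b x = wedge u0 v1 a b x + wedge u1 v0 a b x
   + (\<Sum>i\<in>UNIV. \<Sum>j\<in>UNIV. of_real (1/2) * (of_real (om i j x) * wedge (cov Gam i u0) (cov Gam j v0) a b x))
   + (\<Sum>i\<in>UNIV. \<Sum>j\<in>UNIV. Hform Gam om i j a b x * u0 i x * v0 j x)"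
  by (simp add: wedge1_def lwedge_def fmul2_def sum_fun_apply)

lemma snd_wedge1_qinv_dx_cov: "snd (wedge1 Gam om (cl (dx k)) (lcov Gam k xi)) a b x
   + (\<Sum>i\<in>UNIV. \<Sum>j\<in>UNIV. snd (wedge1 Gam om (lam (lfmul (\<lambda>x. - (1/2) * om i j x) (lcov Gam i (cl (dx k))))) (lcov Gam j (lcov Gam k xi))) a b x)
   = wedge (dx k) (cov Gam k (snd xi)) a b x
     + (\<Sum>i\<in>UNIV. \<Sum>j\<in>UNIV. Hform Gam om i j a b x * dx k i x * cov Gam k (fst xi) j x)"
proof -
  obtain x0 x1 where xi: "xi = (x0, x1)" by (cases xi)
  have 1: "snd (wedge1 Gam om (cl (dx k)) (lcov Gam k (x0, x1))) a b x = wedge (dx k) (cov Gam k x1) a b x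
     + (\<Sum>i\<in>UNIV. \<Sum>j\<in>UNIV. of_real (1/2) * (of_real (om i j x) * wedge (cov Gam i (dx k)) (cov Gam j (cov Gam k x0)) a b x))
     + (\<Sum>i\<in>UNIV. \<Sum>j\<in>UNIV. Hform Gam om i j a b x * dx k i x * cov Gam k x0 j x)"
    unfolding cl_def lcov_def by (simp only: snd_wedge1 fst_conv snd_conv wedge_zero_left) simp
  have 2: "snd (wedge1 Gam om (lam (lfmul (\<lambda>x. - (1/2) * om i j x) (lcov Gam i (cl (dx k))))) (lcov Gam j (lcov Gam k (x0, x1)))) a b x
      = - (of_real (1/2) * (of_real (om i j x) * wedge (cov Gam i (dx k)) (cov Gam j (cov Gam k x0)) a b x))" for i j
    unfolding cl_def lcov_def lam_def lfmul_def
    by (simp only: snd_wedge1 fst_conv snd_conv wedge_zero_left cov_zero wedge_fmul_left) (simp add: wedge_def)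
  show ?thesis unfolding xi fst_conv snd_conv unfolding 1 2 by (simp add: sum_negf)
qed

lemma snd_wedge1_curvature_term: "snd (wedge1 Gam om (lam (lfmul f (cl (dx k)))) (lsub P Q)) a b x
   = wedge (fmul f (dx k)) (fst P - fst Q) a b x"
  unfolding cl_def lam_def lfmul_def lsub_def
  by (simp only: snd_wedge1 fst_conv snd_conv wedge_zero_left cov_zero) (simp add: wedge_def fmul_def)

lemma snd_wedge1_qinv_column: "snd (wedge1 Gam om ((\<lambda>a. fst X a c, \<lambda>a. snd X a c)) (cl (dx c))) a b x
   + (\<Sum>i\<in>UNIV. \<Sum>j\<in>UNIV. snd (wedge1 Gam om (lam (lfmul (\<lambda>x. - (1/2) * om i j x) (lcov Gam i (\<lambda>a. fst X a c, \<lambda>a. snd X a c)))) (lcov Gam j (cl (dx c)))) a b x)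
   = wedge (\<lambda>a. snd X a c) (dx c) a b x
     + (\<Sum>i\<in>UNIV. \<Sum>j\<in>UNIV. Hform Gam om i j a b x * fst X i c x * dx c j x)"
proof -
  have 1: "snd (wedge1 Gam om ((\<lambda>a. fst X a c, \<lambda>a. snd X a c)) (cl (dx c))) a b x = wedge (\<lambda>a. snd X a c) (dx c) a b x
     + (\<Sum>i\<in>UNIV. \<Sum>j\<in>UNIV. of_real (1/2) * (of_real (om i j x) * wedge (cov Gam i (\<lambda>a. fst X a c)) (cov Gam j (dx c)) a b x))
     + (\<Sum>i\<in>UNIV. \<Sum>j\<in>UNIV. Hform Gam om i j a b x * fst X i c x * dx c j x)"
    unfolding cl_def by (simp only: snd_wedge1 fst_conv snd_conv wedge_zero_right) simp
  have 2: "snd (wedge1 Gam om (lam (lfmul (\<lambda>x. - (1/2) * om i j x) (lcov Gam i (\<lambda>a. fst X a c, \<lambda>a. snd X a c)))) (lcov Gam j (cl (dx c)))) a b x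
      = - (of_real (1/2) * (of_real (om i j x) * wedge (cov Gam i (\<lambda>a. fst X a c)) (cov Gam j (dx c)) a b x))" for i j
    unfolding cl_def lcov_def lam_def lfmul_def
    by (simp only: snd_wedge1 fst_conv snd_conv wedge_zero_left cov_zero wedge_fmul_left) (simp add: wedge_def)
  show ?thesis unfolding 1 2 by (simp add: sum_negf)
qed

lemma sum_mset_qinv: "sum_mset (image_mset g (qinv Gam om u v)) = g (u, v)
   + (\<Sum>i\<in>UNIV. \<Sum>j\<in>UNIV. g (lam (lfmul (\<lambda>x. - (1/2) * om i j x) (lcov Gam i u)), lcov Gam j v))"
  unfolding qinv_def by (simp add: multiset.map_comp sum_mset_mset_set sum_UNIV_prod comp_def)

lemma sum_mset_nablaQ: "sum_mset (image_mset g (nablaQ Gam om xi)) =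
   (\<Sum>k\<in>UNIV. g (cl (dx k), lcov Gam k xi) + (\<Sum>i\<in>UNIV. \<Sum>j\<in>UNIV. g (lam (lfmul (\<lambda>x. - (1/2) * om i j x) (lcov Gam i (cl (dx k)))), lcov Gam j (lcov Gam k xi))))
   + (\<Sum>i\<in>UNIV. \<Sum>j\<in>UNIV. \<Sum>k\<in>UNIV. g (lam (lfmul (\<lambda>x. - (1/2) * om i j x) (cl (dx k))),
            lsub (lcov Gam k (lcov Gam j (lcov Gam i xi))) (lcov Gam j (lcov Gam k (lcov Gam i xi)))))"
  unfolding nablaQ_def by (simp add: sum_mset_image_sum sum_mset_qinv)

lemma sum_mset_qinvT: "sum_mset (image_mset g (qinvT Gam om X)) =
   (\<Sum>c\<in>UNIV. g ((\<lambda>a. fst X a c, \<lambda>a. snd X a c), cl (dx c))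
     + (\<Sum>i\<in>UNIV. \<Sum>j\<in>UNIV. g (lam (lfmul (\<lambda>x. - (1/2) * om i j x) (lcov Gam i (\<lambda>a. fst X a c, \<lambda>a. snd X a c))), lcov Gam j (cl (dx c)))))"
  unfolding qinvT_def by (simp add: sum_mset_image_sum sum_mset_qinv)

lemma snd_qtorsion_eq: "snd (qtorsion Gam om S xi) a b x =
    (\<Sum>k\<in>UNIV. wedge (dx k) (cov Gam k (snd xi)) a b x
       + (\<Sum>i\<in>UNIV. \<Sum>j\<in>UNIV. Hform Gam om i j a b x * dx k i x * cov Gam k (fst xi) j x))
  + (\<Sum>i\<in>UNIV. \<Sum>j\<in>UNIV. \<Sum>k\<in>UNIV. wedge (fmul (\<lambda>x. - (1/2) * om i j x) (dx k))
        (fst (lcov Gam k (lcov Gam j (lcov Gam i xi))) - fst (lcov Gam j (lcov Gam k (lcov Gam i xi)))) a b x)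
  + (\<Sum>c\<in>UNIV. wedge (\<lambda>a. snd (QS Gam om S xi) a c) (dx c) a b x
       + (\<Sum>i\<in>UNIV. \<Sum>j\<in>UNIV. Hform Gam om i j a b x * fst (QS Gam om S xi) i c x * dx c j x))
  - d1 (snd xi) a b x"
proof -
  have "snd (qtorsion Gam om S xi) a b x = snd (wedge1_sum Gam om (nablaQS Gam om S xi)) a b x - d1 (snd xi) a b x"
    by (simp add: qtorsion_def ld1_def)
  also have "snd (wedge1_sum Gam om (nablaQS Gam om S xi)) a b x =
     sum_mset (image_mset (\<lambda>(u, v). snd (wedge1 Gam om u v) a b x) (nablaQ Gam om xi))
     + sum_mset (image_mset (\<lambda>(u, v). snd (wedge1 Gam om u v) a b x) (qinvT Gam om (QS Gam om S xi)))"
    unfolding snd_wedge1_sum nablaQS_def by simp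
  also note sum_mset_nablaQ
  also note sum_mset_qinvT
  finally show ?thesis
    by (simp only: prod.case snd_wedge1_qinv_dx_cov snd_wedge1_curvature_term snd_wedge1_qinv_column)
qed

lemma fst_qtorsion_eq: "fst (qtorsion Gam om S xi) a b x =
    (\<Sum>k\<in>UNIV. wedge (dx k) (cov Gam k (fst xi)) a b x)
  + (\<Sum>c\<in>UNIV. wedge (\<lambda>a. fst (QS Gam om S xi) a c) (dx c) a b x)
  - d1 (fst xi) a b x"
proof -
  have "fst (qtorsion Gam om S xi) a b x = fst (wedge1_sum Gam om (nablaQS Gam om S xi)) a b x - d1 (fst xi) a b x"
    by (simp add: qtorsion_def ld1_def)
  also have "fst (wedge1_sum Gam om (nablaQS Gam om S xi)) a b x =
     sum_mset (image_mset (\<lambda>(u, v). fst (wedge1 Gam om u v) a b x) (nablaQ Gam om xi))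
     + sum_mset (image_mset (\<lambda>(u, v). fst (wedge1 Gam om u v) a b x) (qinvT Gam om (QS Gam om S xi)))"
    unfolding fst_wedge1_sum nablaQS_def by simp
  also note sum_mset_nablaQ
  also note sum_mset_qinvT
  finally show ?thesis
    by (simp add: cl_def lam_def lfmul_def lcov_def lsub_def fst_wedge1 wedge_zero_left cov_zero)
qed

lemma fst_qtorsion_zero:
  assumes "torsion_free_plus U Gam S" "x \<in> U" "\<And>m. smooth_on U (fst xi m)"
  shows "fst (qtorsion Gam om S xi) a b x = 0"
proof -
  have "wedgeT (\<lambda>k m y. cov Gam k (fst xi) m y + Sop S (fst xi) k m y) a b x = d1 (fst xi) a b x"
    using assms unfolding torsion_free_plus_def by blast
  then show ?thesis unfolding fst_qtorsion_eq wedge_dx_left wedge_dx_right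
    by (simp add: wedgeT_def QS_def algebra_simps)
qed

section \<open>The \<open>\<lambda>\<^sup>1\<close>-part of the quantum torsion\<close>

lemma nabnabS_antisym_alg:
  fixes w :: "'n::finite \<Rightarrow> 'n \<Rightarrow> complex" and Q :: "'n \<Rightarrow> 'n \<Rightarrow> 'n \<Rightarrow> 'n \<Rightarrow> complex"
    and R :: "'n \<Rightarrow> 'n \<Rightarrow> 'n \<Rightarrow> 'n \<Rightarrow> complex" and Tt Sv :: "'n \<Rightarrow> 'n \<Rightarrow> 'n \<Rightarrow> complex"
    and DSv TD :: "'n \<Rightarrow> 'n \<Rightarrow> 'n \<Rightarrow> 'n \<Rightarrow> complex" and D :: "'n \<Rightarrow> 'n \<Rightarrow> complex" and z :: "'n \<Rightarrow> complex"
    and Xv :: "'n \<Rightarrow> 'n \<Rightarrow> complex"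
  assumes Hw: "\<And>i j. w i j = - w j i"
    and HS: "\<And>p a b. Sv p a b - Sv p b a = Tt p a b"
    and HD: "\<And>p a b j. DSv p a b j - DSv p b a j = TD p a b j"
    and HX: "\<And>a b. Xv a b = (\<Sum>p\<in>UNIV. z p * Sv p a b)"
    and HQ: "\<And>i j a b. Q i j a b - Q j i a b = - (\<Sum>l\<in>UNIV. Xv l b * R l a i j) - (\<Sum>l\<in>UNIV. Xv a l * R l b i j)
        - (\<Sum>p\<in>UNIV. D j p * DSv p a b i) + (\<Sum>p\<in>UNIV. D i p * DSv p a b j)
        + (\<Sum>p\<in>UNIV. (\<Sum>l\<in>UNIV. z l * R l p i j) * Sv p a b)"
  shows "(\<Sum>i\<in>UNIV. \<Sum>j\<in>UNIV. (1/2) * (w i j * Q i j a b)) - (\<Sum>i\<in>UNIV. \<Sum>j\<in>UNIV. (1/2) * (w i j * Q i j b a))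
    = (\<Sum>i\<in>UNIV. \<Sum>p\<in>UNIV. D i p * ((1/2) * (\<Sum>j\<in>UNIV. w i j * TD p a b j)))
    + (\<Sum>p\<in>UNIV. z p * ((1/4) * (\<Sum>i\<in>UNIV. \<Sum>j\<in>UNIV. w i j * (- (\<Sum>l\<in>UNIV. Tt p l b * R l a i j)
        + (\<Sum>l\<in>UNIV. Tt p l a * R l b i j) + (\<Sum>q\<in>UNIV. R p q i j * Tt q a b)))))"
proof -
  define A1 where "A1 = (\<lambda>i j. - (\<Sum>l\<in>UNIV. (\<Sum>p\<in>UNIV. z p * Tt p l b) * R l a i j))"
  define A2 where "A2 = (\<lambda>i j. (\<Sum>l\<in>UNIV. (\<Sum>p\<in>UNIV. z p * Tt p l a) * R l b i j))"
  define A3 where "A3 = (\<lambda>i j. (\<Sum>p\<in>UNIV. D i p * TD p a b j))"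
  define A5 where "A5 = (\<lambda>i j. (\<Sum>p\<in>UNIV. (\<Sum>l\<in>UNIV. z l * R l p i j) * Tt p a b))"
  have step1: "(\<Sum>i\<in>UNIV. \<Sum>j\<in>UNIV. (1/2) * (w i j * Q i j a b)) - (\<Sum>i\<in>UNIV. \<Sum>j\<in>UNIV. (1/2) * (w i j * Q i j b a))
     = (1/2) * (\<Sum>i\<in>UNIV. \<Sum>j\<in>UNIV. w i j * (Q i j a b - Q i j b a))"
    by (simp add: algebra_simps sum_subtractf sum_distrib_left)
  have Xd: "Xv l c - Xv c l = (\<Sum>p\<in>UNIV. z p * Tt p l c)" for l c
    unfolding HX HS[symmetric] by (simp add: algebra_simps sum_subtractf)
  have step2: "(Q i j a b - Q i j b a) - (Q j i a b - Q j i b a) = A1 i j + A2 i j - A3 j i + A3 i j + A5 i j" for i j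
  proof -
    have "(Q i j a b - Q i j b a) - (Q j i a b - Q j i b a) = (Q i j a b - Q j i a b) - (Q i j b a - Q j i b a)" by simp
    also have "\<dots> = - (\<Sum>l\<in>UNIV. (Xv l b - Xv b l) * R l a i j) + (\<Sum>l\<in>UNIV. (Xv l a - Xv a l) * R l b i j)
        - (\<Sum>p\<in>UNIV. D j p * (DSv p a b i - DSv p b a i)) + (\<Sum>p\<in>UNIV. D i p * (DSv p a b j - DSv p b a j))
        + (\<Sum>p\<in>UNIV. (\<Sum>l\<in>UNIV. z l * R l p i j) * (Sv p a b - Sv p b a))"
      unfolding HQ by (simp add: algebra_simps sum_subtractf sum.distrib)
    finally show ?thesis unfolding Xd HD HS A1_def A2_def A3_def A5_def by simp
  qed
  have LHS: "(\<Sum>i\<in>UNIV. \<Sum>j\<in>UNIV. (1/2) * (w i j * Q i j a b)) - (\<Sum>i\<in>UNIV. \<Sum>j\<in>UNIV. (1/2) * (w i j * Q i j b a))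
     = (1/4) * ((\<Sum>i\<in>UNIV. \<Sum>j\<in>UNIV. w i j * A1 i j) + (\<Sum>i\<in>UNIV. \<Sum>j\<in>UNIV. w i j * A2 i j)
        + (\<Sum>i\<in>UNIV. \<Sum>j\<in>UNIV. w i j * (A3 i j - A3 j i)) + (\<Sum>i\<in>UNIV. \<Sum>j\<in>UNIV. w i j * A5 i j))"
  proof -
    have "(\<Sum>i\<in>UNIV. \<Sum>j\<in>UNIV. w i j * (Q i j a b - Q i j b a))
       = (1/2) * (\<Sum>i\<in>UNIV. \<Sum>j\<in>UNIV. w i j * ((Q i j a b - Q i j b a) - (Q j i a b - Q j i b a)))"
      by (rule sum_antisym_weight[OF Hw])
    also have "\<dots> = (1/2) * (\<Sum>i\<in>UNIV. \<Sum>j\<in>UNIV. w i j * A1 i j + w i j * A2 i j + w i j * (A3 i j - A3 j i) + w i j * A5 i j)"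
      unfolding step2 by (simp add: algebra_simps)
    also have "\<dots> = (1/2) * ((\<Sum>i\<in>UNIV. \<Sum>j\<in>UNIV. w i j * A1 i j) + (\<Sum>i\<in>UNIV. \<Sum>j\<in>UNIV. w i j * A2 i j)
        + (\<Sum>i\<in>UNIV. \<Sum>j\<in>UNIV. w i j * (A3 i j - A3 j i)) + (\<Sum>i\<in>UNIV. \<Sum>j\<in>UNIV. w i j * A5 i j))"
      by (simp only: sum.distrib)
    finally show ?thesis unfolding step1 by (simp add: mult.commute)
  qed
  have p3: "(\<Sum>i\<in>UNIV. \<Sum>j\<in>UNIV. w i j * (A3 i j - A3 j i)) = 2 * (\<Sum>i\<in>UNIV. \<Sum>j\<in>UNIV. w i j * A3 i j)"
  proof -
    have "(\<Sum>i\<in>UNIV. \<Sum>j\<in>UNIV. w i j * A3 i j) = (1/2) * (\<Sum>i\<in>UNIV. \<Sum>j\<in>UNIV. w i j * (A3 i j - A3 j i))"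
      by (rule sum_antisym_weight[OF Hw])
    then show ?thesis by (simp add: mult.commute)
  qed
  have p3b: "(\<Sum>i\<in>UNIV. \<Sum>j\<in>UNIV. w i j * A3 i j) = (\<Sum>i\<in>UNIV. \<Sum>p\<in>UNIV. D i p * (\<Sum>j\<in>UNIV. w i j * TD p a b j))"
    unfolding A3_def sum_distrib_left by (subst sum_swap_inner) (simp add: mult_ac)
  have p1: "(\<Sum>i\<in>UNIV. \<Sum>j\<in>UNIV. w i j * A1 i j) = - (\<Sum>p\<in>UNIV. z p * (\<Sum>i\<in>UNIV. \<Sum>j\<in>UNIV. w i j * (\<Sum>l\<in>UNIV. Tt p l b * R l a i j)))"
    unfolding A1_def sum_distrib_left sum_distrib_right sum_negf mult_minus_right by (subst sum_rotate4) (simp add: mult_ac)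
  have p2: "(\<Sum>i\<in>UNIV. \<Sum>j\<in>UNIV. w i j * A2 i j) = (\<Sum>p\<in>UNIV. z p * (\<Sum>i\<in>UNIV. \<Sum>j\<in>UNIV. w i j * (\<Sum>l\<in>UNIV. Tt p l a * R l b i j)))"
    unfolding A2_def sum_distrib_left sum_distrib_right by (subst sum_rotate4) (simp add: mult_ac)
  have p5: "(\<Sum>i\<in>UNIV. \<Sum>j\<in>UNIV. w i j * A5 i j) = (\<Sum>p\<in>UNIV. z p * (\<Sum>i\<in>UNIV. \<Sum>j\<in>UNIV. w i j * (\<Sum>q\<in>UNIV. R p q i j * Tt q a b)))"
    unfolding A5_def sum_distrib_left sum_distrib_right by (subst sum_rotate4) (simp add: mult_ac)
  show ?thesis unfolding LHS p3 p3b p1 p2 p5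
    by (simp add: algebra_simps sum.distrib sum_subtractf sum_distrib_left)
qed

context poisson_chart begin

lemma cov2_nabS_commutator:
  assumes x: "x \<in> U" and se: "\<And>l. smooth_on U (xi l)"
  shows "cov2 Gam i (nabS Gam S j xi) a b x - cov2 Gam j (nabS Gam S i xi) a b x
     = - (\<Sum>l\<in>UNIV. Sop S xi l b x * of_real (curv Gam l a i j x)) - (\<Sum>l\<in>UNIV. Sop S xi a l x * of_real (curv Gam l b i j x))
        - (\<Sum>p\<in>UNIV. cov Gam j xi p x * of_real (S_cd Gam S p a b i x)) + (\<Sum>p\<in>UNIV. cov Gam i xi p x * of_real (S_cd Gam S p a b j x))
        + (\<Sum>p\<in>UNIV. (\<Sum>l\<in>UNIV. xi l x * of_real (curv Gam l p i j x)) * of_real (S p a b x))"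
proof -
  have sX: "\<And>a b. smooth_on U (Sop S xi a b)" by (rule smooth_Sop[OF open_U smooth_S se])
  have sc: "\<And>k l. smooth_on U (cov Gam k xi l)" by (rule smooth_cov[OF open_U smooth_Gam se])
  have r: "cov2 Gam i (cov2 Gam j (Sop S xi)) a b x - cov2 Gam j (cov2 Gam i (Sop S xi)) a b x
     = - (\<Sum>l\<in>UNIV. Sop S xi l b x * of_real (curv Gam l a i j x)) - (\<Sum>l\<in>UNIV. Sop S xi a l x * of_real (curv Gam l b i j x))"
    by (rule cov2_commutator[OF open_U x smooth_Gam sX])
  have n1: "nabS Gam S i (cov Gam j xi) a b x = (\<Sum>p\<in>UNIV. cov Gam j xi p x * of_real (S_cd Gam S p a b i x))"
    by (rule nabS_eq[OF open_U x smooth_S sc])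
  have n2: "nabS Gam S j (cov Gam i xi) a b x = (\<Sum>p\<in>UNIV. cov Gam i xi p x * of_real (S_cd Gam S p a b j x))"
    by (rule nabS_eq[OF open_U x smooth_S sc])
  have c: "cov Gam i (cov Gam j xi) p x - cov Gam j (cov Gam i xi) p x = - (\<Sum>l\<in>UNIV. xi l x * of_real (curv Gam l p i j x))" for p
    by (rule cov_commutator[OF open_U x smooth_Gam se])
  have so: "Sop S (cov Gam i (cov Gam j xi)) a b x - Sop S (cov Gam j (cov Gam i xi)) a b x
     = - (\<Sum>p\<in>UNIV. (\<Sum>l\<in>UNIV. xi l x * of_real (curv Gam l p i j x)) * of_real (S p a b x))"
  proof -
    have "Sop S (cov Gam i (cov Gam j xi)) a b x - Sop S (cov Gam j (cov Gam i xi)) a b x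
       = (\<Sum>p\<in>UNIV. (cov Gam i (cov Gam j xi) p x - cov Gam j (cov Gam i xi) p x) * of_real (S p a b x))"
      by (simp add: Sop_def algebra_simps sum_subtractf)
    then show ?thesis unfolding c by (simp add: sum_negf)
  qed
  show ?thesis unfolding cov2_nabS_eq[OF x se, of i j] cov2_nabS_eq[OF x se, of j i]
    using r n1 n2 so by (simp add: algebra_simps)
qed

lemma nabnabS_antisym:
  assumes x: "x \<in> U" and se: "\<And>l. smooth_on U (xi l)"
  shows "(\<Sum>i\<in>UNIV. \<Sum>j\<in>UNIV. of_real (1/2) * fmul2 (om i j) (nabnabS Gam S i j xi) a b x)
       - (\<Sum>i\<in>UNIV. \<Sum>j\<in>UNIV. of_real (1/2) * fmul2 (om i j) (nabnabS Gam S i j xi) b a x)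
    = (\<Sum>i\<in>UNIV. \<Sum>p\<in>UNIV. cov Gam i xi p x * ((1/2) * (\<Sum>j\<in>UNIV. of_real (om i j x) * of_real (tors_cd Gam p a b j x))))
    + (\<Sum>p\<in>UNIV. xi p x * ((1/4) * (\<Sum>i\<in>UNIV. \<Sum>j\<in>UNIV. of_real (om i j x) * (- (\<Sum>l\<in>UNIV. of_real (tors Gam p l b x) * of_real (curv Gam l a i j x))
        + (\<Sum>l\<in>UNIV. of_real (tors Gam p l a x) * of_real (curv Gam l b i j x)) + (\<Sum>q\<in>UNIV. of_real (curv Gam p q i j x) * of_real (tors Gam q a b x))))))"
proof -
  have Hw: "complex_of_real (om i j x) = - of_real (om j i x)" for i j
    by (subst poisson_antisym[OF compatible x, of i j]) simp
  have HS: "\<And>p a b. complex_of_real (S p a b x) - of_real (S p b a x) = of_real (tors Gam p a b x)"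
    using torsion_free_plus_S_antisym[OF torsion_free x] by (metis of_real_diff)
  have HD: "\<And>p a b j. complex_of_real (S_cd Gam S p a b j x) - of_real (S_cd Gam S p b a j x) = of_real (tors_cd Gam p a b j x)"
    using S_cd_antisym[OF x] by (metis of_real_diff)
  have HX: "\<And>a b. Sop S xi a b x = (\<Sum>p\<in>UNIV. xi p x * of_real (S p a b x))" by (simp add: Sop_def)
  have lhs: "of_real (1/2) * fmul2 (om i j) (nabnabS Gam S i j xi) c d x = (1/2) * (of_real (om i j x) * cov2 Gam i (nabS Gam S j xi) c d x)" for i j c d
    by (simp add: fmul2_def nabnabS_def)
  show ?thesis unfolding lhs
    by (rule nabnabS_antisym_alg[where Xv = "\<lambda>a b. Sop S xi a b x" and DSv = "\<lambda>p a b j. of_real (S_cd Gam S p a b j x)",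
          OF Hw HS HD HX cov2_nabS_commutator[OF x se]])
qed

lemma curvature_term_eq:
  assumes x: "x \<in> U" and se: "\<And>l. smooth_on U (xi0 l)"
  shows "(\<Sum>i\<in>UNIV. \<Sum>j\<in>UNIV. \<Sum>k\<in>UNIV. wedge (fmul (\<lambda>x. - (1/2) * om i j x) (dx k))
        (fst (lcov Gam k (lcov Gam j (lcov Gam i (xi0, xi1)))) - fst (lcov Gam j (lcov Gam k (lcov Gam i (xi0, xi1))))) a b x)
    = (\<Sum>i\<in>UNIV. \<Sum>l\<in>UNIV. cov Gam i xi0 l x * ((1/2) * (\<Sum>j\<in>UNIV. of_real (om i j x) * (of_real (curv Gam l b a j x) - of_real (curv Gam l a b j x)))))"
proof -
  have sc: "\<And>l. smooth_on U (cov Gam i xi0 l)" for i by (rule smooth_cov[OF open_U smooth_Gam se])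
  have c: "cov Gam k (cov Gam j (cov Gam i xi0)) m x - cov Gam j (cov Gam k (cov Gam i xi0)) m x
      = - (\<Sum>l\<in>UNIV. cov Gam i xi0 l x * of_real (curv Gam l m k j x))" for i j k m
    by (rule cov_commutator[OF open_U x smooth_Gam sc])
  have w: "(\<Sum>k\<in>UNIV. wedge (fmul (\<lambda>x. - (1/2) * om i j x) (dx k))
        (fst (lcov Gam k (lcov Gam j (lcov Gam i (xi0, xi1)))) - fst (lcov Gam j (lcov Gam k (lcov Gam i (xi0, xi1))))) a b x)
      = of_real (- (1/2) * om i j x) * ((cov Gam a (cov Gam j (cov Gam i xi0)) b x - cov Gam j (cov Gam a (cov Gam i xi0)) b x)
          - (cov Gam b (cov Gam j (cov Gam i xi0)) a x - cov Gam j (cov Gam b (cov Gam i xi0)) a x))" for i j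
  proof -
    have "(\<Sum>k\<in>UNIV. wedge (fmul (\<lambda>x. - (1/2) * om i j x) (dx k))
        (fst (lcov Gam k (lcov Gam j (lcov Gam i (xi0, xi1)))) - fst (lcov Gam j (lcov Gam k (lcov Gam i (xi0, xi1))))) a b x)
      = of_real (- (1/2) * om i j x) * (\<Sum>k\<in>UNIV. wedge (dx k) (\<lambda>m y. cov Gam k (cov Gam j (cov Gam i xi0)) m y - cov Gam j (cov Gam k (cov Gam i xi0)) m y) a b x)"
      by (simp add: wedge_fmul_left lcov_def sum_distrib_left fun_diff_def)
    also have "\<dots> = of_real (- (1/2) * om i j x) * ((cov Gam a (cov Gam j (cov Gam i xi0)) b x - cov Gam j (cov Gam a (cov Gam i xi0)) b x)
          - (cov Gam b (cov Gam j (cov Gam i xi0)) a x - cov Gam j (cov Gam b (cov Gam i xi0)) a x))"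
      unfolding wedge_dx_left ..
    finally show ?thesis .
  qed
  have "(\<Sum>i\<in>UNIV. \<Sum>j\<in>UNIV. \<Sum>k\<in>UNIV. wedge (fmul (\<lambda>x. - (1/2) * om i j x) (dx k))
        (fst (lcov Gam k (lcov Gam j (lcov Gam i (xi0, xi1)))) - fst (lcov Gam j (lcov Gam k (lcov Gam i (xi0, xi1))))) a b x)
     = (\<Sum>i\<in>UNIV. \<Sum>j\<in>UNIV. \<Sum>l\<in>UNIV. cov Gam i xi0 l x * ((1/2) * (of_real (om i j x) * (of_real (curv Gam l b a j x) - of_real (curv Gam l a b j x)))))"
    unfolding w c by (simp add: algebra_simps sum_subtractf sum_distrib_left sum_negf)
  also have "\<dots> = (\<Sum>i\<in>UNIV. \<Sum>l\<in>UNIV. \<Sum>j\<in>UNIV. cov Gam i xi0 l x * ((1/2) * (of_real (om i j x) * (of_real (curv Gam l b a j x) - of_real (curv Gam l a b j x)))))"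
    by (rule sum_swap_inner)
  finally show ?thesis by (simp add: sum_distrib_left)
qed

lemma Hform_eq:
  assumes x: "x \<in> U"
  shows "Hform Gam om i j a b x = of_real ((1/2) * (\<Sum>s\<in>UNIV. om i s x * torsion_curvature Gam j b a s x))"
proof -
  have "Hform Gam om i j a b x = (\<Sum>m\<in>UNIV. \<Sum>n\<in>UNIV. (\<Sum>s\<in>UNIV. of_real ((1/4) * om i s x * (tors_cd Gam j n m s x - 2 * curv Gam j n m s x))) * wedge (dx m) (dx n) a b x)"
    by (simp add: Hform_def sum_distrib_right)
  also have "\<dots> = (\<Sum>s\<in>UNIV. of_real ((1/4) * om i s x * (tors_cd Gam j b a s x - 2 * curv Gam j b a s x)))
       - (\<Sum>s\<in>UNIV. of_real ((1/4) * om i s x * (tors_cd Gam j a b s x - 2 * curv Gam j a b s x)))"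
    by (rule sum_wedge_dx_dx)
  also have "\<dots> = of_real ((1/2) * (\<Sum>s\<in>UNIV. om i s x * torsion_curvature Gam j b a s x))"
    unfolding torsion_curvature_def tors_cd_antisym[OF x, of j a b] by (simp add: algebra_simps sum_subtractf sum_distrib_left sum.distrib sum_negf sum_divide_distrib[symmetric])
  finally show ?thesis .
qed


lemma torsion_curvature_cancel:
  assumes x: "x \<in> U"
  shows "(1/2) * (\<Sum>s\<in>UNIV. om i s x * torsion_curvature Gam l b a s x)
     + (1/2) * (\<Sum>j\<in>UNIV. om i j x * (curv Gam l b a j x - curv Gam l a b j x))
     + (1/2) * (\<Sum>j\<in>UNIV. om i j x * tors_cd Gam l a b j x) = 0"
proof -
  have z: "om i j x * torsion_curvature Gam l b a j x + om i j x * (curv Gam l b a j x - curv Gam l a b j x) + om i j x * tors_cd Gam l a b j x = 0" for j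
    unfolding torsion_curvature_def tors_cd_antisym[OF x, of l b a] by (simp add: algebra_simps)
  have "(\<Sum>s\<in>UNIV. om i s x * torsion_curvature Gam l b a s x) + (\<Sum>j\<in>UNIV. om i j x * (curv Gam l b a j x - curv Gam l a b j x))
     + (\<Sum>j\<in>UNIV. om i j x * tors_cd Gam l a b j x)
     = (\<Sum>j\<in>UNIV. om i j x * torsion_curvature Gam l b a j x + om i j x * (curv Gam l b a j x - curv Gam l a b j x) + om i j x * tors_cd Gam l a b j x)"
    by (simp only: sum.distrib)
  also have "\<dots> = 0" unfolding z by simp
  finally show ?thesis by (simp add: algebra_simps)
qed

lemma Acoef_antisym_eq:
  assumes x: "x \<in> U"
  shows "(\<Sum>i\<in>UNIV. \<Sum>j\<in>UNIV. ((1/2) * (\<Sum>s\<in>UNIV. om i s x * torsion_curvature Gam j b a s x)) * S p i j x)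
     + (1/4) * (\<Sum>i\<in>UNIV. \<Sum>j\<in>UNIV. om i j x * (- (\<Sum>l\<in>UNIV. tors Gam p l b x * curv Gam l a i j x)
        + (\<Sum>l\<in>UNIV. tors Gam p l a x * curv Gam l b i j x) + (\<Sum>q\<in>UNIV. curv Gam p q i j x * tors Gam q a b x)))
     = (1/2) * (Acoef Gam om S p b a x - Acoef Gam om S p a b x)"
proof -
  define M where "M i j = (\<Sum>s\<in>UNIV. om i s x * torsion_curvature Gam j b a s x)" for i j
  have Ms: "M i j = M j i" for i j unfolding M_def by (rule poisson_torsion_curvature_symmetric[OF open_U x smooth_Gam smooth_om compatible])
  have A1a: "(\<Sum>i\<in>UNIV. \<Sum>s\<in>UNIV. \<Sum>j\<in>UNIV. (1/4) * om i s x * (S p i j x + S p j i x)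
        * (tors_cd Gam j b a s x - curv Gam j b a s x + curv Gam j a b s x))
      = (\<Sum>i\<in>UNIV. \<Sum>j\<in>UNIV. (1/4) * (S p i j x + S p j i x) * M i j)"
  proof -
    have "(\<Sum>i\<in>UNIV. \<Sum>s\<in>UNIV. \<Sum>j\<in>UNIV. (1/4) * om i s x * (S p i j x + S p j i x)
        * (tors_cd Gam j b a s x - curv Gam j b a s x + curv Gam j a b s x))
      = (\<Sum>i\<in>UNIV. \<Sum>j\<in>UNIV. \<Sum>s\<in>UNIV. (1/4) * om i s x * (S p i j x + S p j i x)
        * (tors_cd Gam j b a s x - curv Gam j b a s x + curv Gam j a b s x))"
      by (rule sum_swap_inner)
    then show ?thesis unfolding M_def torsion_curvature_def by (simp add: sum_distrib_left mult_ac)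
  qed
  have A1b: "(\<Sum>i\<in>UNIV. \<Sum>s\<in>UNIV. \<Sum>j\<in>UNIV. (1/4) * om i s x * (S p i j x + S p j i x)
        * (tors_cd Gam j a b s x - curv Gam j a b s x + curv Gam j b a s x))
      = - (\<Sum>i\<in>UNIV. \<Sum>j\<in>UNIV. (1/4) * (S p i j x + S p j i x) * M i j)"
  proof -
    have e: "(1/4) * om i s x * (S p i j x + S p j i x) * (tors_cd Gam j a b s x - curv Gam j a b s x + curv Gam j b a s x)
       = - ((1/4) * om i s x * (S p i j x + S p j i x) * (tors_cd Gam j b a s x - curv Gam j b a s x + curv Gam j a b s x))" for i s j
      using tors_cd_antisym[OF x, of j a b s] by (simp add: algebra_simps)
    show ?thesis unfolding A1a[symmetric] e by (simp only: sum_negf)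
  qed
  have Sw: "(\<Sum>i\<in>UNIV. \<Sum>j\<in>UNIV. S p j i x * M i j) = (\<Sum>i\<in>UNIV. \<Sum>j\<in>UNIV. S p i j x * M i j)"
  proof -
    have "(\<Sum>i\<in>UNIV. \<Sum>j\<in>UNIV. S p j i x * M i j) = (\<Sum>j\<in>UNIV. \<Sum>i\<in>UNIV. S p j i x * M i j)" by (rule sum.swap)
    also have "\<dots> = (\<Sum>i\<in>UNIV. \<Sum>j\<in>UNIV. S p i j x * M i j)" using Ms by simp
    finally show ?thesis .
  qed
  have part1: "(\<Sum>i\<in>UNIV. \<Sum>j\<in>UNIV. ((1/2) * M i j) * S p i j x)
      = (1/2) * ((\<Sum>i\<in>UNIV. \<Sum>j\<in>UNIV. (1/4) * (S p i j x + S p j i x) * M i j) - (- (\<Sum>i\<in>UNIV. \<Sum>j\<in>UNIV. (1/4) * (S p i j x + S p j i x) * M i j)))"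
    using Sw by (simp add: algebra_simps sum.distrib sum_divide_distrib[symmetric])
  have part2: "(1/4) * (\<Sum>i\<in>UNIV. \<Sum>j\<in>UNIV. om i j x * (- (\<Sum>l\<in>UNIV. tors Gam p l b x * curv Gam l a i j x)
        + (\<Sum>l\<in>UNIV. tors Gam p l a x * curv Gam l b i j x) + (\<Sum>q\<in>UNIV. curv Gam p q i j x * tors Gam q a b x)))
     = (1/2) * ((- (\<Sum>i\<in>UNIV. \<Sum>j\<in>UNIV. \<Sum>s\<in>UNIV. (1/4) * om i j x * (tors Gam s b a x * curv Gam p s i j x
           - tors Gam p s a x * curv Gam s b i j x + tors Gam p s b x * curv Gam s a i j x)))
       - (- (\<Sum>i\<in>UNIV. \<Sum>j\<in>UNIV. \<Sum>s\<in>UNIV. (1/4) * om i j x * (tors Gam s a b x * curv Gam p s i j x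
           - tors Gam p s b x * curv Gam s a i j x + tors Gam p s a x * curv Gam s b i j x))))"
  proof -
    have t: "tors Gam s b a x = - tors Gam s a b x" for s by (simp add: tors_def)
    show ?thesis unfolding t
      by (simp add: algebra_simps sum.distrib sum_subtractf sum_distrib_left sum_negf)
  qed
  have goal: "(\<Sum>i\<in>UNIV. \<Sum>j\<in>UNIV. ((1/2) * M i j) * S p i j x)
     + (1/4) * (\<Sum>i\<in>UNIV. \<Sum>j\<in>UNIV. om i j x * (- (\<Sum>l\<in>UNIV. tors Gam p l b x * curv Gam l a i j x)
        + (\<Sum>l\<in>UNIV. tors Gam p l a x * curv Gam l b i j x) + (\<Sum>q\<in>UNIV. curv Gam p q i j x * tors Gam q a b x)))
     = (1/2) * (Acoef Gam om S p b a x - Acoef Gam om S p a b x)"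
    unfolding Acoef_def A1a A1b part1 part2 by (simp add: algebra_simps)
  then show ?thesis unfolding M_def .
qed


lemma Hform_cov_coefficient:
  assumes x: "x \<in> U"
  shows "Hform Gam om i l a b x
      + (1/2) * (\<Sum>j\<in>UNIV. of_real (om i j x) * (of_real (curv Gam l b a j x) - of_real (curv Gam l a b j x)))
      + (1/2) * (\<Sum>j\<in>UNIV. of_real (om i j x) * of_real (tors_cd Gam l a b j x)) = 0"
proof -
  have "complex_of_real ((1/2) * (\<Sum>s\<in>UNIV. om i s x * torsion_curvature Gam l b a s x)
     + (1/2) * (\<Sum>j\<in>UNIV. om i j x * (curv Gam l b a j x - curv Gam l a b j x))
     + (1/2) * (\<Sum>j\<in>UNIV. om i j x * tors_cd Gam l a b j x)) = 0"
    unfolding torsion_curvature_cancel[OF x] by simp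
  then show ?thesis unfolding Hform_eq[OF x] by simp
qed

lemma Hform_S_coefficient:
  assumes x: "x \<in> U"
  shows "(\<Sum>i\<in>UNIV. \<Sum>j\<in>UNIV. Hform Gam om i j a b x * of_real (S p i j x))
     + (1/4) * (\<Sum>i\<in>UNIV. \<Sum>j\<in>UNIV. of_real (om i j x) * (- (\<Sum>l\<in>UNIV. of_real (tors Gam p l b x) * of_real (curv Gam l a i j x))
        + (\<Sum>l\<in>UNIV. of_real (tors Gam p l a x) * of_real (curv Gam l b i j x)) + (\<Sum>q\<in>UNIV. of_real (curv Gam p q i j x) * of_real (tors Gam q a b x))))
     = of_real ((1/2) * (Acoef Gam om S p b a x - Acoef Gam om S p a b x))"
proof -
  have "complex_of_real ((\<Sum>i\<in>UNIV. \<Sum>j\<in>UNIV. ((1/2) * (\<Sum>s\<in>UNIV. om i s x * torsion_curvature Gam j b a s x)) * S p i j x)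
     + (1/4) * (\<Sum>i\<in>UNIV. \<Sum>j\<in>UNIV. om i j x * (- (\<Sum>l\<in>UNIV. tors Gam p l b x * curv Gam l a i j x)
        + (\<Sum>l\<in>UNIV. tors Gam p l a x * curv Gam l b i j x) + (\<Sum>q\<in>UNIV. curv Gam p q i j x * tors Gam q a b x))))
     = of_real ((1/2) * (Acoef Gam om S p b a x - Acoef Gam om S p a b x))"
    unfolding Acoef_antisym_eq[OF x] ..
  then show ?thesis unfolding Hform_eq[OF x] by simp
qed

lemma snd_qtorsion_reduced:
  assumes x: "x \<in> U" and s0: "\<And>m. smooth_on U (xi0 m)" and s1: "\<And>m. smooth_on U (xi1 m)"
  shows "snd (qtorsion Gam om S (xi0, xi1)) a b x
     = (\<Sum>i\<in>UNIV. \<Sum>j\<in>UNIV. Hform Gam om i j a b x * (cov Gam i xi0 j x + Sop S xi0 i j x))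
     + (\<Sum>i\<in>UNIV. \<Sum>l\<in>UNIV. cov Gam i xi0 l x
          * ((1/2) * (\<Sum>j\<in>UNIV. of_real (om i j x) * (of_real (curv Gam l b a j x) - of_real (curv Gam l a b j x)))))
     + ((\<Sum>i\<in>UNIV. \<Sum>j\<in>UNIV. of_real (1/2) * fmul2 (om i j) (nabnabS Gam S i j xi0) a b x)
        - (\<Sum>i\<in>UNIV. \<Sum>j\<in>UNIV. of_real (1/2) * fmul2 (om i j) (nabnabS Gam S i j xi0) b a x))"
proof -
  define H where "H i j = Hform Gam om i j a b x" for i j
  define Y where "Y c d = (\<Sum>i\<in>UNIV. \<Sum>j\<in>UNIV. of_real (1/2) * fmul2 (om i j) (nabnabS Gam S i j xi0) c d x)" for c d
  have T1: "(\<Sum>k\<in>UNIV. wedge (dx k) (cov Gam k xi1) a b x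
       + (\<Sum>i\<in>UNIV. \<Sum>j\<in>UNIV. Hform Gam om i j a b x * dx k i x * cov Gam k xi0 j x))
      = (cov Gam a xi1 b x - cov Gam b xi1 a x) + (\<Sum>i\<in>UNIV. \<Sum>j\<in>UNIV. H i j * cov Gam i xi0 j x)"
  proof -
    have "(\<Sum>k\<in>UNIV. \<Sum>i\<in>UNIV. \<Sum>j\<in>UNIV. H i j * dx k i x * cov Gam k xi0 j x)
       = (\<Sum>i\<in>UNIV. \<Sum>j\<in>UNIV. \<Sum>k\<in>UNIV. H i j * dx k i x * cov Gam k xi0 j x)" by (rule sum_rotate3)
    also have "\<dots> = (\<Sum>i\<in>UNIV. \<Sum>j\<in>UNIV. H i j * cov Gam i xi0 j x)"
      by (simp only: sum_dx_left[of _ _ x "\<lambda>k. cov Gam k xi0 _ x"])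
    finally show ?thesis unfolding sum.distrib wedge_dx_left H_def by simp
  qed
  have QS_snd: "snd (QS Gam om S (xi0, xi1)) c d x = Sop S xi1 c d x + Y c d" for c d
    by (simp add: QS_def Y_def)
  have T3: "(\<Sum>c\<in>UNIV. wedge (\<lambda>a. snd (QS Gam om S (xi0, xi1)) a c) (dx c) a b x
       + (\<Sum>i\<in>UNIV. \<Sum>j\<in>UNIV. Hform Gam om i j a b x * fst (QS Gam om S (xi0, xi1)) i c x * dx c j x))
      = (Sop S xi1 a b x + Y a b - (Sop S xi1 b a x + Y b a)) + (\<Sum>i\<in>UNIV. \<Sum>j\<in>UNIV. H i j * Sop S xi0 i j x)"
  proof -
    have "(\<Sum>c\<in>UNIV. \<Sum>i\<in>UNIV. \<Sum>j\<in>UNIV. H i j * Sop S xi0 i c x * dx c j x)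
       = (\<Sum>i\<in>UNIV. \<Sum>j\<in>UNIV. \<Sum>c\<in>UNIV. H i j * Sop S xi0 i c x * dx c j x)" by (rule sum_rotate3)
    also have "\<dots> = (\<Sum>i\<in>UNIV. \<Sum>j\<in>UNIV. H i j * Sop S xi0 i j x)"
      by (simp only: sum_dx_right[of _ "\<lambda>c. Sop S xi0 _ c x"])
    finally have "(\<Sum>c\<in>UNIV. \<Sum>i\<in>UNIV. \<Sum>j\<in>UNIV. Hform Gam om i j a b x * Sop S xi0 i c x * dx c j x)
        = (\<Sum>i\<in>UNIV. \<Sum>j\<in>UNIV. H i j * Sop S xi0 i j x)"
      unfolding H_def .
    moreover have "fst (QS Gam om S (xi0, xi1)) = Sop S xi0" by (simp add: QS_def)
    ultimately show ?thesis unfolding sum.distrib wedge_dx_right QS_snd by simp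
  qed
  \<comment> \<open>the remaining \<open>xi1\<close>-terms cancel because \<open>\<nabla> + S\<close> is torsion free\<close>
  have tf1: "cov Gam a xi1 b x + Sop S xi1 a b x - (cov Gam b xi1 a x + Sop S xi1 b a x) = d1 xi1 a b x"
  proof -
    have "wedgeT (\<lambda>k m y. cov Gam k xi1 m y + Sop S xi1 k m y) a b x = d1 xi1 a b x"
      using torsion_free s1 x unfolding torsion_free_plus_def by blast
    then show ?thesis by (simp add: wedgeT_def)
  qed
  have "snd (qtorsion Gam om S (xi0, xi1)) a b x
     = (\<Sum>i\<in>UNIV. \<Sum>j\<in>UNIV. H i j * cov Gam i xi0 j x)
       + (\<Sum>i\<in>UNIV. \<Sum>j\<in>UNIV. \<Sum>k\<in>UNIV. wedge (fmul (\<lambda>x. - (1/2) * om i j x) (dx k))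
        (fst (lcov Gam k (lcov Gam j (lcov Gam i (xi0, xi1)))) - fst (lcov Gam j (lcov Gam k (lcov Gam i (xi0, xi1))))) a b x)
       + (\<Sum>i\<in>UNIV. \<Sum>j\<in>UNIV. H i j * Sop S xi0 i j x) + (Y a b - Y b a)"
    unfolding snd_qtorsion_eq snd_conv fst_conv T1 T3 using tf1 by (simp add: algebra_simps)
  then show ?thesis
    unfolding curvature_term_eq[OF x s0] H_def Y_def by (simp add: distrib_left sum.distrib add_ac)
qed

lemma snd_qtorsion:
  assumes x: "x \<in> U" and s0: "\<And>m. smooth_on U (xi0 m)" and s1: "\<And>m. smooth_on U (xi1 m)"
  shows "snd (qtorsion Gam om S (xi0, xi1)) a b x =
     of_real (1/2) * (\<Sum>p\<in>UNIV. \<Sum>n\<in>UNIV. \<Sum>m\<in>UNIV. xi0 p x * of_real (Acoef Gam om S p n m x) * wedge (dx m) (dx n) a b x)"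
proof -
  define H where "H i j = Hform Gam om i j a b x" for i j
  define D where "D i l = cov Gam i xi0 l x" for i l
  define z where "z p = xi0 p x" for p
  have e4: "(\<Sum>i\<in>UNIV. \<Sum>j\<in>UNIV. of_real (1/2) * fmul2 (om i j) (nabnabS Gam S i j xi0) a b x)
       - (\<Sum>i\<in>UNIV. \<Sum>j\<in>UNIV. of_real (1/2) * fmul2 (om i j) (nabnabS Gam S i j xi0) b a x)
    = (\<Sum>i\<in>UNIV. \<Sum>p\<in>UNIV. D i p * ((1/2) * (\<Sum>j\<in>UNIV. of_real (om i j x) * of_real (tors_cd Gam p a b j x))))
    + (\<Sum>p\<in>UNIV. z p * ((1/4) * (\<Sum>i\<in>UNIV. \<Sum>j\<in>UNIV. of_real (om i j x) * (- (\<Sum>l\<in>UNIV. of_real (tors Gam p l b x) * of_real (curv Gam l a i j x))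
        + (\<Sum>l\<in>UNIV. of_real (tors Gam p l a x) * of_real (curv Gam l b i j x)) + (\<Sum>q\<in>UNIV. of_real (curv Gam p q i j x) * of_real (tors Gam q a b x))))))"
    unfolding D_def z_def by (rule nabnabS_antisym[OF x s0])
  have hd: "(\<Sum>i\<in>UNIV. \<Sum>j\<in>UNIV. H i j * cov Gam i xi0 j x) = (\<Sum>i\<in>UNIV. \<Sum>l\<in>UNIV. D i l * H i l)"
    unfolding D_def by (simp add: mult.commute)
  have hs: "(\<Sum>i\<in>UNIV. \<Sum>j\<in>UNIV. H i j * Sop S xi0 i j x) = (\<Sum>p\<in>UNIV. z p * (\<Sum>i\<in>UNIV. \<Sum>j\<in>UNIV. H i j * of_real (S p i j x)))"
  proof -
    have "(\<Sum>i\<in>UNIV. \<Sum>j\<in>UNIV. H i j * Sop S xi0 i j x) = (\<Sum>i\<in>UNIV. \<Sum>j\<in>UNIV. \<Sum>p\<in>UNIV. z p * (H i j * of_real (S p i j x)))"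
      unfolding Sop_def z_def by (simp add: sum_distrib_left mult_ac)
    also have "\<dots> = (\<Sum>p\<in>UNIV. \<Sum>i\<in>UNIV. \<Sum>j\<in>UNIV. z p * (H i j * of_real (S p i j x)))"
      by (rule sum_rotate3[symmetric])
    finally show ?thesis by (simp add: sum_distrib_left)
  qed
  have Hf: "Hform Gam om i j a b x = H i j" for i j
    by (simp add: H_def)
  have "snd (qtorsion Gam om S (xi0, xi1)) a b x
     = (\<Sum>i\<in>UNIV. \<Sum>l\<in>UNIV. D i l * H i l)
       + (\<Sum>i\<in>UNIV. \<Sum>l\<in>UNIV. D i l * ((1/2) * (\<Sum>j\<in>UNIV. of_real (om i j x) * (of_real (curv Gam l b a j x) - of_real (curv Gam l a b j x)))))
       + (\<Sum>p\<in>UNIV. z p * (\<Sum>i\<in>UNIV. \<Sum>j\<in>UNIV. H i j * of_real (S p i j x)))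
       + ((\<Sum>i\<in>UNIV. \<Sum>p\<in>UNIV. D i p * ((1/2) * (\<Sum>j\<in>UNIV. of_real (om i j x) * of_real (tors_cd Gam p a b j x))))
    + (\<Sum>p\<in>UNIV. z p * ((1/4) * (\<Sum>i\<in>UNIV. \<Sum>j\<in>UNIV. of_real (om i j x) * (- (\<Sum>l\<in>UNIV. of_real (tors Gam p l b x) * of_real (curv Gam l a i j x))
        + (\<Sum>l\<in>UNIV. of_real (tors Gam p l a x) * of_real (curv Gam l b i j x)) + (\<Sum>q\<in>UNIV. of_real (curv Gam p q i j x) * of_real (tors Gam q a b x)))))))"
    unfolding e4[symmetric] hd[symmetric] hs[symmetric]
    unfolding snd_qtorsion_reduced[OF x s0 s1] D_def by (simp add: Hf distrib_left sum.distrib add_ac)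
  also have "\<dots> = (\<Sum>i\<in>UNIV. \<Sum>l\<in>UNIV. D i l * (H i l + (1/2) * (\<Sum>j\<in>UNIV. of_real (om i j x) * (of_real (curv Gam l b a j x) - of_real (curv Gam l a b j x)))
      + (1/2) * (\<Sum>j\<in>UNIV. of_real (om i j x) * of_real (tors_cd Gam l a b j x))))
     + (\<Sum>p\<in>UNIV. z p * ((\<Sum>i\<in>UNIV. \<Sum>j\<in>UNIV. H i j * of_real (S p i j x))
     + (1/4) * (\<Sum>i\<in>UNIV. \<Sum>j\<in>UNIV. of_real (om i j x) * (- (\<Sum>l\<in>UNIV. of_real (tors Gam p l b x) * of_real (curv Gam l a i j x))
        + (\<Sum>l\<in>UNIV. of_real (tors Gam p l a x) * of_real (curv Gam l b i j x)) + (\<Sum>q\<in>UNIV. of_real (curv Gam p q i j x) * of_real (tors Gam q a b x))))))"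
    by (simp only: distrib_left sum.distrib add_ac)
  also have "\<dots> = (\<Sum>p\<in>UNIV. z p * of_real ((1/2) * (Acoef Gam om S p b a x - Acoef Gam om S p a b x)))"
    unfolding H_def Hform_cov_coefficient[OF x] Hform_S_coefficient[OF x] by simp
  finally show ?thesis unfolding z_def sum_wedge_dx_dx_coefficients .
qed

end

theorem corollary4p12:
  fixes U :: "(real^'n::finite) set"
    and om :: "'n \<Rightarrow> 'n \<Rightarrow> real^'n \<Rightarrow> real"
    and Gam :: "'n \<Rightarrow> 'n \<Rightarrow> 'n \<Rightarrow> real^'n \<Rightarrow> real"
    and S :: "'n \<Rightarrow> 'n \<Rightarrow> 'n \<Rightarrow> real^'n \<Rightarrow> real"
    and xi :: "'n lform"
  assumes "open U"
    and "\<And>i j. smooth_on U (om i j)"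
    and "\<And>i j k. smooth_on U (Gam i j k)"
    and "\<And>p n m. smooth_on U (S p n m)"
    and "\<And>m. smooth_on U (fst xi m)"
    and "\<And>m. smooth_on U (snd xi m)"
    and "poisson_compatible U om Gam"
    and "torsion_free_plus U Gam S"
  shows "\<forall>x\<in>U. \<forall>a b.
           fst (qtorsion Gam om S xi) a b x = 0 \<and>
           snd (qtorsion Gam om S xi) a b x =
             of_real (1/2) * (\<Sum>p\<in>UNIV. \<Sum>n\<in>UNIV. \<Sum>m\<in>UNIV.
                fst xi p x * of_real (Acoef Gam om S p n m x) * wedge (dx m) (dx n) a b x)"
proof -
  interpret poisson_chart U om Gam S
    using assms by unfold_locales
  obtain xi0 xi1 where xi: "xi = (xi0, xi1)" by (cases xi)
  show ?thesis
    using fst_qtorsion_zero[OF assms(8) _ assms(5)] snd_qtorsion[of _ xi0 xi1] assms(5,6)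
    unfolding xi by simp
qed

end
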